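(* Let $X\colon\mathbf{CommRing}\to\mathbf{Set}$ be a functor that preserves products, and let $p$ be a prime. Let $Z_{X,p}$ be the species such that a $Z_{X,p}$-structure on a finite set is a way to make that set into a ring $k_p$ that is a finite product of finite fields of characteristic $p$ together with an element of $X(k_p)$, and let $F_{X,p}$ be the species such that an $F_{X,p}$-structure on a finite set is a way to make that set into a field $k$ of characteristic $p$ together with an element of $X(k)$. Then $Z_{X,p}\cong\exp_D(F_{X,p})$.
   Context: A species is a functor from the groupoid of finite sets and bijections to $\mathbf{Set}$ (structures are transported along bijections); a Dirichlet species is one with value $\emptyset$ on $\emptyset$. The one-element ring counts as the empty product of fields. Dirichlet product: a cartesian decomposition of a finite set $S$ is an ordered pair $(\pi_1,\pi_2)$ of equivalence relations on $S$ such that each $\pi_1$-class meets each $\pi_2$-class in exactly one element; with $S_i$ the set of $\pi_i$-classes, $(F\cdot_D G)(S)=\coprod_{(\pi_1,\pi_2)}F(S_1)\times G(S_2)$. This is symmetric monoidal with unit $I$, where $I(S)$ is a singleton if $|S|=1$ and empty otherwise. Dirichlet exponential: $F^n_D=F\cdot_D\cdots\cdot_D F$ ($n$ factors) for $n\ge1$, $F^0_D=I$; $S_n$ acts on $F^n_D$ via the symmetry; $\exp_D(F)=\coprod_{n\ge0}F^n_D/S_n$, computed pointwise. *)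

theory Defs
  imports "HOL-Computational_Algebra.Primes" "HOL-Algebra.Algebra" "HOL-Library.Nat_Bijection" "HOL-Combinatorics.Permutations"
begin

definition algchar :: "('a, 'b) ring_scheme \<Rightarrow> nat" where
  "algchar R = (if \<exists>n>0. add_pow R (n::nat) \<one>\<^bsub>R\<^esub> = \<zero>\<^bsub>R\<^esub>
                  then (LEAST n. n > 0 \<and> add_pow R (n::nat) \<one>\<^bsub>R\<^esub> = \<zero>\<^bsub>R\<^esub>) else 0)"

text \<open>A ring structure on the set S: carrier S, operations undefined off S
  (so that a ring structure on S is determined by its operations on S).\<close>
definition ring_on :: "nat set \<Rightarrow> nat ring \<Rightarrow> bool" where
  "ring_on S R \<longleftrightarrow> carrier R = S \<and>
     (\<forall>a b. (a \<notin> S \<or> b \<notin> S) \<longrightarrow> monoid.mult R a b = undefined \<and> ring.add R a b = undefined)"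

definition transp_ring :: "(nat \<Rightarrow> nat) \<Rightarrow> nat ring \<Rightarrow> nat ring" where
  "transp_ring sg R =
    \<lparr> carrier = sg ` carrier R,
      monoid.mult = (\<lambda>a b. if a \<in> sg ` carrier R \<and> b \<in> sg ` carrier R
                then sg (monoid.mult R (inv_into (carrier R) sg a) (inv_into (carrier R) sg b))
                else undefined),
      monoid.one = sg (monoid.one R),
      ring.zero = sg (ring.zero R),
      ring.add = (\<lambda>a b. if a \<in> sg ` carrier R \<and> b \<in> sg ` carrier R
                then sg (ring.add R (inv_into (carrier R) sg a) (inv_into (carrier R) sg b))
                else undefined) \<rparr>"

text \<open>The category: commutative rings whose underlying set is a subset of nat,
  with ring homomorphisms (identified when they agree on the carrier).\<close>
definition is_functor ::
  "(nat ring \<Rightarrow> 'x set) \<Rightarrow> (nat ring \<Rightarrow> nat ring \<Rightarrow> (nat \<Rightarrow> nat) \<Rightarrow> 'x \<Rightarrow> 'x) \<Rightarrow> bool" where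
  "is_functor Xo Xm \<longleftrightarrow>
     (\<forall>R S f. cring R \<and> cring S \<and> f \<in> ring_hom R S \<longrightarrow> Xm R S f \<in> Xo R \<rightarrow> Xo S) \<and>
     (\<forall>R S f g. cring R \<and> cring S \<and> f \<in> ring_hom R S \<and> g \<in> ring_hom R S \<and>
         (\<forall>a\<in>carrier R. f a = g a) \<longrightarrow> (\<forall>x\<in>Xo R. Xm R S f x = Xm R S g x)) \<and>
     (\<forall>R. cring R \<longrightarrow> (\<forall>x\<in>Xo R. Xm R R id x = x)) \<and>
     (\<forall>R S T f g. cring R \<and> cring S \<and> cring T \<and> f \<in> ring_hom R S \<and> g \<in> ring_hom S T
         \<longrightarrow> (\<forall>x\<in>Xo R. Xm R T (g \<circ> f) x = Xm S T g (Xm R S f x)))"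

text \<open>A cone
  (R, p1 : R \<rightarrow> R1, p2 : R \<rightarrow> R2) in CommRing is a product cone iff
  x \<mapsto> (p1 x, p2 x) is a bijection carrier R \<rightarrow> carrier R1 \<times> carrier R2.\<close>
definition preserves_products ::
  "(nat ring \<Rightarrow> 'x set) \<Rightarrow> (nat ring \<Rightarrow> nat ring \<Rightarrow> (nat \<Rightarrow> nat) \<Rightarrow> 'x \<Rightarrow> 'x) \<Rightarrow> bool" where
  "preserves_products Xo Xm \<longleftrightarrow>
     (\<forall>T. cring T \<and> card (carrier T) = 1 \<longrightarrow> (\<exists>y. Xo T = {y})) \<and>
     (\<forall>R R1 R2 p1 p2. cring R \<and> cring R1 \<and> cring R2 \<and>
         p1 \<in> ring_hom R R1 \<and> p2 \<in> ring_hom R R2 \<and>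
         bij_betw (\<lambda>x. (p1 x, p2 x)) (carrier R) (carrier R1 \<times> carrier R2) \<longrightarrow>
         bij_betw (\<lambda>x. (Xm R R1 p1 x, Xm R R2 p2 x)) (Xo R) (Xo R1 \<times> Xo R2))"

text \<open>R is a finite product of finite fields of characteristic p (n = 0 allowed:
  the one-element ring is the empty product).\<close>
definition fin_prod_fin_fields :: "nat \<Rightarrow> nat ring \<Rightarrow> bool" where
  "fin_prod_fin_fields p R \<longleftrightarrow>
     (\<exists>n (K :: nat \<Rightarrow> nat ring) pr.
        (\<forall>i<n. field (K i) \<and> finite (carrier (K i)) \<and> algchar (K i) = p \<and>
               pr i \<in> ring_hom R (K i)) \<and>
        bij_betw (\<lambda>x. \<lambda>i\<in>{..<n}. pr i x) (carrier R) (PiE {..<n} (\<lambda>i. carrier (K i))))"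

definition Zsp :: "(nat ring \<Rightarrow> 'x set) \<Rightarrow> nat \<Rightarrow> nat set \<Rightarrow> (nat ring \<times> 'x) set" where
  "Zsp Xo p S = {(R, x). ring_on S R \<and> cring R \<and> fin_prod_fin_fields p R \<and> x \<in> Xo R}"

definition Fsp :: "(nat ring \<Rightarrow> 'x set) \<Rightarrow> nat \<Rightarrow> nat set \<Rightarrow> (nat ring \<times> 'x) set" where
  "Fsp Xo p S = {(K, x). ring_on S K \<and> field K \<and> algchar K = p \<and> x \<in> Xo K}"

definition transp_struct ::
  "(nat ring \<Rightarrow> nat ring \<Rightarrow> (nat \<Rightarrow> nat) \<Rightarrow> 'x \<Rightarrow> 'x) \<Rightarrow> (nat \<Rightarrow> nat) \<Rightarrow> nat ring \<times> 'x \<Rightarrow> nat ring \<times> 'x" where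
  "transp_struct Xm sg z = (transp_ring sg (fst z), Xm (fst z) (transp_ring sg (fst z)) sg (snd z))"

text \<open>The set of classes S // rel is encoded as a finite set of naturals, so that the
  species (defined on finite subsets of nat) can be evaluated on it.\<close>
definition enc_classes :: "nat set \<Rightarrow> (nat \<times> nat) set \<Rightarrow> nat set" where
  "enc_classes S rel = set_encode ` (S // rel)"

text \<open>Elements of F^n_D(S): lists [(pi_1,f_1),...,(pi_n,f_n)] where (pi_1,...,pi_n) is a
  cartesian decomposition of S (a \<mapsto> (class of a)_i is a bijection
  S \<rightarrow> S/pi_1 \<times> ... \<times> S/pi_n) and f_i an F-structure on S/pi_i.\<close>
definition DirPow :: "(nat set \<Rightarrow> 's set) \<Rightarrow> nat set \<Rightarrow> ((nat \<times> nat) set \<times> 's) list set" where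
  "DirPow F S = {ds. (\<forall>d\<in>set ds. equiv S (fst d) \<and> snd d \<in> F (enc_classes S (fst d))) \<and>
       bij_betw (\<lambda>a. map (\<lambda>d. fst d `` {a}) ds) S (listset (map (\<lambda>d. S // fst d) ds))}"

definition Sn_orbit :: "'b list \<Rightarrow> 'b list set" where
  "Sn_orbit ds = {permute_list t ds | t. t permutes {..<length ds}}"

definition expD :: "(nat set \<Rightarrow> 's set) \<Rightarrow> nat set \<Rightarrow> ((nat \<times> nat) set \<times> 's) list set set" where
  "expD F S = Sn_orbit ` DirPow F S"

definition transp_expD ::
  "((nat \<Rightarrow> nat) \<Rightarrow> 's \<Rightarrow> 's) \<Rightarrow> (nat \<Rightarrow> nat) \<Rightarrow> ((nat \<times> nat) set \<times> 's) list set
     \<Rightarrow> ((nat \<times> nat) set \<times> 's) list set" where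
  "transp_expD Ft sg Orb =
     map (\<lambda>d. ((\<lambda>(a, b). (sg a, sg b)) ` fst d,
              Ft (\<lambda>c. set_encode (sg ` set_decode c)) (snd d))) ` Orb"

definition species_iso ::
  "(nat set \<Rightarrow> 'a set) \<Rightarrow> ((nat \<Rightarrow> nat) \<Rightarrow> 'a \<Rightarrow> 'a) \<Rightarrow>
   (nat set \<Rightarrow> 'b set) \<Rightarrow> ((nat \<Rightarrow> nat) \<Rightarrow> 'b \<Rightarrow> 'b) \<Rightarrow> bool" where
  "species_iso A At B Bt \<longleftrightarrow>
     (\<exists>phi :: nat set \<Rightarrow> 'a \<Rightarrow> 'b.
        (\<forall>S. finite S \<longrightarrow> bij_betw (phi S) (A S) (B S)) \<and>
        (\<forall>S S' sg. finite S \<and> bij_betw sg S S' \<longrightarrow>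
            (\<forall>z\<in>A S. phi S' (At sg z) = Bt sg (phi S z))))"

end

theory Submission
  imports Defs
begin

text \<open>
  A finite product R of finite fields is determined by its field quotients. The kernel of a
  homomorphism from R onto a field contains, hence equals, the kernel of one of the
  projections; so the kernels \<pi> of such surjections are those of the projections, their
  classes form a cartesian decomposition of the underlying set S, and the quotients R/\<pi> are
  the factor fields. As X preserves finite products, X(R) is the product of the X(R/\<pi>).
  Hence a Z-structure (R, x) on S amounts to the unordered family of F-structures
  (R/\<pi>, image of x) on the class sets S/\<pi>, i.e. to an exp_D(F)-structure; conversely such a
  family determines the product ring on S. All constructions commute with transport of
  structure.
\<close>

section \<open>Transport and comparison of ring structures\<close>

text \<open>The definition of transp_ring at arbitrary element types, so that rings of tuples can
  be moved onto sets of naturals.\<close>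
definition transport_ring :: "('a \<Rightarrow> 'b) \<Rightarrow> 'a ring \<Rightarrow> 'b ring" where
  "transport_ring f R =
    \<lparr> carrier = f ` carrier R,
      monoid.mult = (\<lambda>a b. if a \<in> f ` carrier R \<and> b \<in> f ` carrier R
                then f (monoid.mult R (inv_into (carrier R) f a) (inv_into (carrier R) f b))
                else undefined),
      monoid.one = f (monoid.one R),
      ring.zero = f (ring.zero R),
      ring.add = (\<lambda>a b. if a \<in> f ` carrier R \<and> b \<in> f ` carrier R
                then f (ring.add R (inv_into (carrier R) f a) (inv_into (carrier R) f b))
                else undefined) \<rparr>"

lemma transp_ring_eq_transport_ring: "transp_ring = transport_ring"
  by (intro ext) (simp add: transp_ring_def transport_ring_def)

lemma carrier_transport_ring [simp]: "carrier (transport_ring f R) = f ` carrier R"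
  by (simp add: transport_ring_def)

lemma ring_on_transport_ring: "ring_on (f ` carrier R) (transport_ring f R)"
  by (simp add: ring_on_def transport_ring_def)

lemma transport_ring_iso:
  assumes "inj_on f (carrier R)" "ring R"
  shows "f \<in> ring_iso R (transport_ring f R)"
proof -
  interpret ring R by fact
  show ?thesis using assms unfolding ring_iso_def ring_hom_def transport_ring_def
    by (auto simp: bij_betw_def)
qed

lemma transport_ring_hom:
  "inj_on f (carrier R) \<Longrightarrow> ring R \<Longrightarrow> f \<in> ring_hom R (transport_ring f R)"
  using transport_ring_iso ring_iso_def by blast

lemma transport_ring_inv_hom:
  "inj_on f (carrier R) \<Longrightarrow> ring R \<Longrightarrow> inv_into (carrier R) f \<in> ring_hom (transport_ring f R) R"
  using ring_iso_set_sym[OF _ transport_ring_iso] ring_iso_def by blast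

lemma transport_ring_zero_update: "(transport_ring f R)\<lparr>zero := f \<zero>\<^bsub>R\<^esub>\<rparr> = transport_ring f R"
  by (simp add: transport_ring_def)

lemma cring_transport_ring:
  assumes "inj_on f (carrier R)" "cring R"
  shows "cring (transport_ring f R)"
  using cring.ring_iso_imp_img_cring[OF assms(2) transport_ring_iso[OF assms(1) cring.axioms(1)]]
    assms(2) by (simp add: transport_ring_zero_update)

lemma field_transport_ring:
  assumes "inj_on f (carrier R)" "field R"
  shows "field (transport_ring f R)"
  using field.ring_iso_imp_img_field[OF assms(2) transport_ring_iso[OF assms(1)]] assms(2)
  by (simp add: transport_ring_zero_update cring.axioms(1) domain.axioms(1) field.axioms(1))

lemma ring_hom_cong:
  assumes "f \<in> ring_hom R S" "\<And>x. x \<in> carrier R \<Longrightarrow> f x = g x" "ring R"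
  shows "g \<in> ring_hom R S"
proof (rule ring_hom_memI)
  fix x y assume xy: "x \<in> carrier R" "y \<in> carrier R"
  show "g x \<in> carrier S" using ring_hom_closed[OF assms(1) xy(1)] assms(2)[OF xy(1)] by simp
  show "g (x \<otimes>\<^bsub>R\<^esub> y) = g x \<otimes>\<^bsub>S\<^esub> g y"
    using ring_hom_mult[OF assms(1) xy] assms(2) xy ring.ring_simprules(5)[OF assms(3) xy] by metis
  show "g (x \<oplus>\<^bsub>R\<^esub> y) = g x \<oplus>\<^bsub>S\<^esub> g y"
    using ring_hom_add[OF assms(1) xy] assms(2) xy ring.ring_simprules(1)[OF assms(3) xy] by metis
next
  show "g \<one>\<^bsub>R\<^esub> = \<one>\<^bsub>S\<^esub>"
    using ring_hom_one[OF assms(1)] assms(2) ring.ring_simprules(6)[OF assms(3)] by metis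
qed

lemma ring_on_eqI:
  fixes R R' :: "nat ring"
  assumes "ring_on S R" "ring_on S R'"
    "\<And>a b. a \<in> S \<Longrightarrow> b \<in> S \<Longrightarrow> a \<otimes>\<^bsub>R\<^esub> b = a \<otimes>\<^bsub>R'\<^esub> b"
    "\<And>a b. a \<in> S \<Longrightarrow> b \<in> S \<Longrightarrow> a \<oplus>\<^bsub>R\<^esub> b = a \<oplus>\<^bsub>R'\<^esub> b"
    "\<one>\<^bsub>R\<^esub> = \<one>\<^bsub>R'\<^esub>" "\<zero>\<^bsub>R\<^esub> = \<zero>\<^bsub>R'\<^esub>"
  shows "R = R'"
proof -
  have "monoid.mult R = monoid.mult R'"
    using assms(1-3) unfolding ring_on_def by (intro ext) metis
  moreover have "ring.add R = ring.add R'"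
    using assms(1,2,4) unfolding ring_on_def by (intro ext) metis
  ultimately show ?thesis using assms(1,2,5,6) unfolding ring_on_def
    by (intro ring.equality) auto
qed

lemma ring_on_eqI_by_homs:
  fixes R R' :: "nat ring"
  assumes "ring_on S R" "ring_on S R'" "ring R" "ring R'" "\<And>j. j < m \<Longrightarrow> ring (Q j)"
    and hom: "\<And>j. j < m \<Longrightarrow> h j \<in> ring_hom R (Q j)" and hom': "\<And>j. j < m \<Longrightarrow> h j \<in> ring_hom R' (Q j)"
    and separating: "\<And>a b. a \<in> S \<Longrightarrow> b \<in> S \<Longrightarrow> (\<And>j. j < m \<Longrightarrow> h j a = h j b) \<Longrightarrow> a = b"
  shows "R = R'"
proof -
  interpret R: ring R by fact
  interpret R': ring R' by fact
  have carrier: "carrier R = S" "carrier R' = S" using assms(1,2) by (simp_all add: ring_on_def)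
  show ?thesis
  proof (rule ring_on_eqI[OF assms(1,2)])
    fix a b assume "a \<in> S" "b \<in> S"
    then show "a \<otimes>\<^bsub>R\<^esub> b = a \<otimes>\<^bsub>R'\<^esub> b" "a \<oplus>\<^bsub>R\<^esub> b = a \<oplus>\<^bsub>R'\<^esub> b"
      using carrier ring_hom_mult[OF hom] ring_hom_mult[OF hom'] ring_hom_add[OF hom] ring_hom_add[OF hom']
        R'.m_closed R'.a_closed by (auto intro!: separating)
  next
    show "\<one>\<^bsub>R\<^esub> = \<one>\<^bsub>R'\<^esub>"
      using carrier ring_hom_one[OF hom] ring_hom_one[OF hom'] R'.one_closed by (auto intro!: separating)
    show "\<zero>\<^bsub>R\<^esub> = \<zero>\<^bsub>R'\<^esub>"
      using carrier ring_hom_zero[OF hom R.ring_axioms assms(5)] ring_hom_zero[OF hom' R'.ring_axioms assms(5)]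
        R'.zero_closed by (auto intro!: separating)
  qed
qed

lemma ring_hom_add_pow_one:
  assumes "h \<in> ring_hom A B" "ring A" "ring B"
  shows "h (add_pow A (n::nat) \<one>\<^bsub>A\<^esub>) = add_pow B n \<one>\<^bsub>B\<^esub>"
proof -
  interpret A: ring A by fact
  show ?thesis
  proof (induction n)
    case 0
    then show ?case using assms by (simp add: add_pow_def ring_hom_zero)
  next
    case (Suc n)
    then show ?case using assms A.add.nat_pow_closed[of "\<one>\<^bsub>A\<^esub>" n]
      by (simp add: add_pow_def ring_hom_add ring_hom_one)
  qed
qed

lemma algchar_ring_iso:
  assumes "h \<in> ring_iso A B" "ring A" "ring B"
  shows "algchar A = algchar B"
proof -
  interpret A: ring A by fact
  have hom: "h \<in> ring_hom A B" and inj: "inj_on h (carrier A)"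
    using assms(1) by (auto simp: ring_iso_def bij_betw_def)
  have same_char: "add_pow A (n::nat) \<one>\<^bsub>A\<^esub> = \<zero>\<^bsub>A\<^esub> \<longleftrightarrow> add_pow B n \<one>\<^bsub>B\<^esub> = \<zero>\<^bsub>B\<^esub>" for n
    using inj_onD[OF inj] ring_hom_add_pow_one[OF hom assms(2,3), of n] ring_hom_zero[OF hom assms(2,3)]
      A.add.nat_pow_closed[of "\<one>\<^bsub>A\<^esub>" n] by fastforce
  show ?thesis unfolding algchar_def by (simp only: same_char)
qed

section \<open>Finite products of rings\<close>

definition ring_prod :: "nat \<Rightarrow> (nat \<Rightarrow> 'a ring) \<Rightarrow> (nat \<Rightarrow> 'a) ring" where
  "ring_prod n K = \<lparr> carrier = PiE {..<n} (\<lambda>i. carrier (K i)),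
      monoid.mult = (\<lambda>f g. \<lambda>i\<in>{..<n}. f i \<otimes>\<^bsub>K i\<^esub> g i),
      monoid.one = (\<lambda>i\<in>{..<n}. \<one>\<^bsub>K i\<^esub>),
      ring.zero = (\<lambda>i\<in>{..<n}. \<zero>\<^bsub>K i\<^esub>),
      ring.add = (\<lambda>f g. \<lambda>i\<in>{..<n}. f i \<oplus>\<^bsub>K i\<^esub> g i) \<rparr>"

lemma carrier_ring_prod [simp]: "carrier (ring_prod n K) = PiE {..<n} (\<lambda>i. carrier (K i))"
  by (simp add: ring_prod_def)

lemma cring_ring_prod:
  assumes "\<And>i. i < n \<Longrightarrow> cring (K i)"
  shows "cring (ring_prod n K)"
proof (rule cringI)
  show "abelian_group (ring_prod n K)"
  proof (rule abelian_groupI)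
    fix x assume x: "x \<in> carrier (ring_prod n K)"
    show "\<exists>y\<in>carrier (ring_prod n K). y \<oplus>\<^bsub>ring_prod n K\<^esub> x = \<zero>\<^bsub>ring_prod n K\<^esub>"
      apply (rule bexI[of _ "\<lambda>i\<in>{..<n}. \<ominus>\<^bsub>K i\<^esub> x i"])
      using x assms by (auto simp: ring_prod_def PiE_def Pi_def extensional_def fun_eq_iff
          intro!: cring.axioms(1)[THEN ring.ring_simprules(9)] cring.axioms(1)[THEN ring.ring_simprules(3)])
  qed (use assms in \<open>auto simp: ring_prod_def PiE_def Pi_def extensional_def fun_eq_iff
     cring.cring_simprules(1,2,8)\<close>;
     metis cring.cring_simprules(1,7,10,16))+
  show "comm_monoid (ring_prod n K)"
    by (rule comm_monoidI)
     (use assms in \<open>auto simp: ring_prod_def PiE_def Pi_def extensional_def fun_eq_iff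
       cring.cring_simprules(5,6,12)\<close>; metis cring.cring_simprules(5,6,11,12,14) cring.axioms(1) ring.ring_simprules(26))+
  fix x y z assume "x \<in> carrier (ring_prod n K)" "y \<in> carrier (ring_prod n K)" "z \<in> carrier (ring_prod n K)"
  then show "(x \<oplus>\<^bsub>ring_prod n K\<^esub> y) \<otimes>\<^bsub>ring_prod n K\<^esub> z
      = x \<otimes>\<^bsub>ring_prod n K\<^esub> z \<oplus>\<^bsub>ring_prod n K\<^esub> y \<otimes>\<^bsub>ring_prod n K\<^esub> z"
    using assms by (auto simp: ring_prod_def PiE_def Pi_def extensional_def fun_eq_iff
       cring.cring_simprules(1,5,13))
qed

lemma ring_prod_proj_hom: "i < n \<Longrightarrow> (\<lambda>f. f i) \<in> ring_hom (ring_prod n K) (K i)"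
  unfolding ring_hom_def ring_prod_def by auto

section \<open>Quotient rings on codes of classes\<close>

definition ker_rel :: "('a, 'b) ring_scheme \<Rightarrow> ('a \<Rightarrow> 'c) \<Rightarrow> ('a \<times> 'a) set" where
  "ker_rel R q = {(a, b). a \<in> carrier R \<and> b \<in> carrier R \<and> q a = q b}"

definition class_code :: "(nat \<times> nat) set \<Rightarrow> nat \<Rightarrow> nat" where
  "class_code \<pi> a = set_encode (\<pi> `` {a})"

definition class_rep :: "nat \<Rightarrow> nat" where
  "class_rep c = (SOME a. a \<in> set_decode c)"

text \<open>The quotient R/\<pi>, realised on the codes of the \<pi>-classes, which is the set at which
  F-structures on the factor are evaluated in the Dirichlet exponential.\<close>
definition quotient_ring :: "nat ring \<Rightarrow> (nat \<times> nat) set \<Rightarrow> nat ring" where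
  "quotient_ring R \<pi> =
    \<lparr> carrier = enc_classes (carrier R) \<pi>,
      monoid.mult = (\<lambda>c d. if c \<in> enc_classes (carrier R) \<pi> \<and> d \<in> enc_classes (carrier R) \<pi>
                then class_code \<pi> (class_rep c \<otimes>\<^bsub>R\<^esub> class_rep d) else undefined),
      monoid.one = class_code \<pi> \<one>\<^bsub>R\<^esub>,
      ring.zero = class_code \<pi> \<zero>\<^bsub>R\<^esub>,
      ring.add = (\<lambda>c d. if c \<in> enc_classes (carrier R) \<pi> \<and> d \<in> enc_classes (carrier R) \<pi>
                then class_code \<pi> (class_rep c \<oplus>\<^bsub>R\<^esub> class_rep d) else undefined) \<rparr>"

lemma carrier_quotient_ring [simp]: "carrier (quotient_ring R \<pi>) = enc_classes (carrier R) \<pi>"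
  by (simp add: quotient_ring_def)

lemma ring_on_quotient_ring: "ring_on (enc_classes (carrier R) \<pi>) (quotient_ring R \<pi>)"
  by (simp add: ring_on_def quotient_ring_def)

lemma ker_rel_Image: "a \<in> carrier R \<Longrightarrow> ker_rel R q `` {a} = {b \<in> carrier R. q a = q b}"
  by (auto simp: ker_rel_def)

lemma equiv_ker_rel: "equiv (carrier R) (ker_rel R q)"
  by (auto simp: ker_rel_def equiv_def refl_on_def sym_def trans_def)

lemma enc_classes_eq_image_class_code: "enc_classes S \<pi> = class_code \<pi> ` S"
  by (auto simp: enc_classes_def class_code_def quotient_def)

lemma class_code_ker_rel_eq_iff:
  assumes "finite (carrier R)" "a \<in> carrier R" "b \<in> carrier R"
  shows "class_code (ker_rel R q) a = class_code (ker_rel R q) b \<longleftrightarrow> q a = q b"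
proof -
  have "class_code (ker_rel R q) a = class_code (ker_rel R q) b \<longleftrightarrow>
      {c \<in> carrier R. q a = q c} = {c \<in> carrier R. q b = q c}"
    unfolding class_code_def using assms by (simp add: ker_rel_Image set_encode_eq)
  also have "\<dots> \<longleftrightarrow> q a = q b"
  proof
    assume "{c \<in> carrier R. q a = q c} = {c \<in> carrier R. q b = q c}"
    then show "q a = q b" using assms(2) by (metis (mono_tags, lifting) mem_Collect_eq)
  qed simp
  finally show ?thesis .
qed

lemma class_rep_ker_rel:
  assumes "finite (carrier R)" "a \<in> carrier R"
  shows "class_rep (class_code (ker_rel R q) a) \<in> carrier R"
    and "q (class_rep (class_code (ker_rel R q) a)) = q a"
proof -
  have decode: "set_decode (class_code (ker_rel R q) a) = {b \<in> carrier R. q a = q b}"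
    unfolding class_code_def using assms by (simp add: ker_rel_Image)
  then have "a \<in> set_decode (class_code (ker_rel R q) a)" using assms(2) by simp
  then have "class_rep (class_code (ker_rel R q) a) \<in> set_decode (class_code (ker_rel R q) a)"
    unfolding class_rep_def by (rule someI)
  then show "class_rep (class_code (ker_rel R q) a) \<in> carrier R"
    and "q (class_rep (class_code (ker_rel R q) a)) = q a"
    using decode by auto
qed

lemma quotient_ring_ker_rel_eqI:
  fixes R K :: "nat ring"
  assumes "ring R" "ring K" "q \<in> ring_hom R K" "q ` carrier R = carrier K"
    "ring_on (carrier K) K" "finite (carrier R)"
    "\<And>a. a \<in> carrier R \<Longrightarrow> q a = class_code (ker_rel R q) a"
  shows "quotient_ring R (ker_rel R q) = K"
proof -
  let ?\<pi> = "ker_rel R q"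
  have "class_code ?\<pi> ` carrier R = q ` carrier R" using assms(7) by (rule image_cong[OF refl, symmetric])
  then have classes: "enc_classes (carrier R) ?\<pi> = carrier K"
    using assms(4) by (simp add: enc_classes_eq_image_class_code)
  have rep: "class_rep c \<in> carrier R" "q (class_rep c) = c" if "c \<in> carrier K" for c
  proof -
    have "c \<in> q ` carrier R" using that assms(4) by simp
    then obtain a where a: "a \<in> carrier R" "c = q a" by auto
    then have "c = class_code ?\<pi> a" using assms(7) by simp
    show "class_rep c \<in> carrier R" "q (class_rep c) = c"
      using class_rep_ker_rel[OF assms(6) a(1), of q] a \<open>c = class_code ?\<pi> a\<close> by simp_all
  qed
  show ?thesis
  proof (rule ring_on_eqI[OF _ assms(5)])
    show "ring_on (carrier K) (quotient_ring R ?\<pi>)"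
      using ring_on_quotient_ring[of R ?\<pi>] classes by simp
    fix a b assume ab: "a \<in> carrier K" "b \<in> carrier K"
    have reps: "class_rep a \<in> carrier R" "class_rep b \<in> carrier R" using rep ab by auto
    have "a \<otimes>\<^bsub>quotient_ring R ?\<pi>\<^esub> b = class_code ?\<pi> (class_rep a \<otimes>\<^bsub>R\<^esub> class_rep b)"
      using ab classes by (simp add: quotient_ring_def)
    also have "\<dots> = q (class_rep a) \<otimes>\<^bsub>K\<^esub> q (class_rep b)"
      using assms(7)[symmetric] ring_hom_mult[OF assms(3)] reps ring.ring_simprules(5)[OF assms(1)]
      by metis
    finally show "a \<otimes>\<^bsub>quotient_ring R ?\<pi>\<^esub> b = a \<otimes>\<^bsub>K\<^esub> b" using rep ab by simp
    have "a \<oplus>\<^bsub>quotient_ring R ?\<pi>\<^esub> b = class_code ?\<pi> (class_rep a \<oplus>\<^bsub>R\<^esub> class_rep b)"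
      using ab classes by (simp add: quotient_ring_def)
    also have "\<dots> = q (class_rep a) \<oplus>\<^bsub>K\<^esub> q (class_rep b)"
      using assms(7)[symmetric] ring_hom_add[OF assms(3)] reps ring.ring_simprules(1)[OF assms(1)]
      by metis
    finally show "a \<oplus>\<^bsub>quotient_ring R ?\<pi>\<^esub> b = a \<oplus>\<^bsub>K\<^esub> b" using rep ab by simp
  next
    have "\<one>\<^bsub>quotient_ring R ?\<pi>\<^esub> = q \<one>\<^bsub>R\<^esub>" "\<zero>\<^bsub>quotient_ring R ?\<pi>\<^esub> = q \<zero>\<^bsub>R\<^esub>"
      using ring.ring_simprules(2,6)[OF assms(1)] by (simp_all add: quotient_ring_def assms(7)[symmetric])
    then show "\<one>\<^bsub>quotient_ring R ?\<pi>\<^esub> = \<one>\<^bsub>K\<^esub>" "\<zero>\<^bsub>quotient_ring R ?\<pi>\<^esub> = \<zero>\<^bsub>K\<^esub>"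
      using ring_hom_one[OF assms(3)] ring_hom_zero[OF assms(3,1,2)] by simp_all
  qed
qed

locale finite_ring_epi =
  fixes R K :: "nat ring" and q :: "nat \<Rightarrow> nat"
  assumes ring_R: "ring R" and ring_K: "ring K" and hom: "q \<in> ring_hom R K"
    and surj: "q ` carrier R = carrier K" and finite_R: "finite (carrier R)"
begin

definition fibre_code :: "nat \<Rightarrow> nat" where
  "fibre_code k = set_encode {a \<in> carrier R. q a = k}"

lemma class_code_ker_rel: "a \<in> carrier R \<Longrightarrow> class_code (ker_rel R q) a = fibre_code (q a)"
  unfolding class_code_def fibre_code_def by (simp add: ker_rel_Image eq_commute)

lemma inj_on_fibre_code: "inj_on fibre_code (carrier K)"
proof (rule inj_onI)
  fix k1 k2 assume k: "k1 \<in> carrier K" "k2 \<in> carrier K" "fibre_code k1 = fibre_code k2"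
  then have fibres: "{a \<in> carrier R. q a = k1} = {a \<in> carrier R. q a = k2}"
    unfolding fibre_code_def using finite_R by (simp add: set_encode_eq)
  have "k1 \<in> q ` carrier R" using k(1) surj by simp
  then obtain a where "a \<in> carrier R" "q a = k1" by auto
  then show "k1 = k2" using fibres by blast
qed

lemma fibre_code_iso: "fibre_code \<in> ring_iso K (transport_ring fibre_code K)"
  by (rule transport_ring_iso[OF inj_on_fibre_code ring_K])

lemma quotient_ring_ker_rel: "quotient_ring R (ker_rel R q) = transport_ring fibre_code K"
proof -
  let ?K' = "transport_ring fibre_code K"
  have ring_K': "ring ?K'"
    using ring.ring_iso_imp_img_ring[OF ring_K fibre_code_iso]
    by (simp add: transport_ring_zero_update)
  have hom': "fibre_code \<circ> q \<in> ring_hom R ?K'"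
    using ring_hom_trans[OF hom transport_ring_hom[OF inj_on_fibre_code ring_K]] .
  have ker: "ker_rel R (fibre_code \<circ> q) = ker_rel R q"
    using inj_on_fibre_code ring_hom_closed[OF hom] by (auto simp: ker_rel_def inj_on_def)
  have "quotient_ring R (ker_rel R (fibre_code \<circ> q)) = ?K'"
  proof (rule quotient_ring_ker_rel_eqI[OF ring_R ring_K' hom' _ _ finite_R])
    show "ring_on (carrier ?K') ?K'" using ring_on_transport_ring by simp
    show "(fibre_code \<circ> q) ` carrier R = carrier ?K'" unfolding image_comp[symmetric] surj by simp
    show "(fibre_code \<circ> q) a = class_code (ker_rel R (fibre_code \<circ> q)) a" if "a \<in> carrier R" for a
      using class_code_ker_rel[OF that] by (simp add: ker)
  qed
  then show ?thesis by (simp add: ker)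
qed

lemma fibre_code_iso_quotient: "fibre_code \<in> ring_iso K (quotient_ring R (ker_rel R q))"
  using fibre_code_iso by (simp add: quotient_ring_ker_rel)

lemma class_code_ring_hom: "class_code (ker_rel R q) \<in> ring_hom R (quotient_ring R (ker_rel R q))"
proof (rule ring_hom_cong[OF _ _ ring_R])
  show "fibre_code \<circ> q \<in> ring_hom R (quotient_ring R (ker_rel R q))"
    using ring_hom_trans[OF hom transport_ring_hom[OF inj_on_fibre_code ring_K]]
    by (simp add: quotient_ring_ker_rel)
  show "(fibre_code \<circ> q) a = class_code (ker_rel R q) a" if "a \<in> carrier R" for a
    using class_code_ker_rel[OF that] by simp
qed

lemma ring_quotient_ring: "ring (quotient_ring R (ker_rel R q))"
  using ring.ring_iso_imp_img_ring[OF ring_K fibre_code_iso]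
  by (simp add: transport_ring_zero_update quotient_ring_ker_rel)

lemma algchar_quotient_ring: "algchar (quotient_ring R (ker_rel R q)) = algchar K"
  using algchar_ring_iso[OF fibre_code_iso_quotient ring_K ring_quotient_ring] by simp

lemma field_quotient_ring: "field K \<Longrightarrow> field (quotient_ring R (ker_rel R q))"
  unfolding quotient_ring_ker_rel by (rule field_transport_ring[OF inj_on_fibre_code])

end

section \<open>Product decompositions and their field quotients\<close>

lemma ker_rel_eq_of_kernel_subset:
  assumes "ring R" "field K" "p \<in> ring_hom R K" "p ` carrier R = carrier K"
    and "ring L" "\<one>\<^bsub>L\<^esub> \<noteq> \<zero>\<^bsub>L\<^esub>" "q \<in> ring_hom R L"
    and kernel_subset: "\<And>a. a \<in> carrier R \<Longrightarrow> p a = \<zero>\<^bsub>K\<^esub> \<Longrightarrow> q a = \<zero>\<^bsub>L\<^esub>"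
  shows "ker_rel R q = ker_rel R p"
proof -
  interpret R: ring R by fact
  interpret K: field K by fact
  interpret L: ring L by fact
  interpret p: ring_hom_ring R K p using assms(3) by (simp add: ring_hom_ringI2 R.ring_axioms K.ring_axioms)
  interpret q: ring_hom_ring R L q using assms(7) by (simp add: ring_hom_ringI2 R.ring_axioms L.ring_axioms)
  have "q a = q b \<longleftrightarrow> p a = p b" if ab: "a \<in> carrier R" "b \<in> carrier R" for a b
  proof
    assume "p a = p b"
    then have "p (a \<ominus>\<^bsub>R\<^esub> b) = \<zero>\<^bsub>K\<^esub>" using ab by (simp add: R.minus_eq K.minus_eq[symmetric])
    then have "q (a \<ominus>\<^bsub>R\<^esub> b) = \<zero>\<^bsub>L\<^esub>" using ab kernel_subset by simp
    then show "q a = q b" using ab by (simp add: R.minus_eq L.minus_eq[symmetric] L.r_right_minus_eq)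
  next
    assume q_eq: "q a = q b"
    show "p a = p b"
    proof (rule ccontr)
      assume "p a \<noteq> p b"
      then have d: "p (a \<ominus>\<^bsub>R\<^esub> b) \<in> Units K"
        using ab K.field_Units by (simp add: R.minus_eq K.minus_eq[symmetric] K.r_right_minus_eq)
      have "inv\<^bsub>K\<^esub> p (a \<ominus>\<^bsub>R\<^esub> b) \<in> p ` carrier R" using d assms(4) by simp
      then obtain z where z: "z \<in> carrier R" "p z = inv\<^bsub>K\<^esub> p (a \<ominus>\<^bsub>R\<^esub> b)" by auto
      \<comment> \<open>1 - z(a - b) lies in the kernel of p but is sent to 1 by q\<close>
      let ?w = "\<one>\<^bsub>R\<^esub> \<ominus>\<^bsub>R\<^esub> z \<otimes>\<^bsub>R\<^esub> (a \<ominus>\<^bsub>R\<^esub> b)"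
      have "p ?w = \<zero>\<^bsub>K\<^esub>"
        using z ab d by (simp add: R.minus_eq K.minus_eq[symmetric] K.Units_l_inv)
      then have "q ?w = \<zero>\<^bsub>L\<^esub>" using kernel_subset z ab by simp
      moreover have "q ?w = \<one>\<^bsub>L\<^esub>"
        using z ab q_eq by (simp add: R.minus_eq L.minus_eq L.r_neg)
      ultimately show False using assms(6) by simp
    qed
  qed
  then show ?thesis unfolding ker_rel_def by blast
qed

locale ring_product_cone =
  fixes R :: "('a, 'b) ring_scheme" and n :: nat and K :: "nat \<Rightarrow> ('c, 'd) ring_scheme"
    and pr :: "nat \<Rightarrow> 'a \<Rightarrow> 'c"
  assumes cring_R: "cring R" and cring_factor: "i < n \<Longrightarrow> cring (K i)"
    and proj_hom: "i < n \<Longrightarrow> pr i \<in> ring_hom R (K i)"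
    and tuple_bij: "bij_betw (\<lambda>x. \<lambda>i\<in>{..<n}. pr i x) (carrier R) (PiE {..<n} (\<lambda>i. carrier (K i)))"
begin

lemma tuple_surj:
  assumes "\<And>i. i < n \<Longrightarrow> f i \<in> carrier (K i)"
  shows "\<exists>x\<in>carrier R. \<forall>i<n. pr i x = f i"
proof -
  have "(\<lambda>i\<in>{..<n}. f i) \<in> (\<lambda>x. \<lambda>i\<in>{..<n}. pr i x) ` carrier R"
    using tuple_bij assms by (simp add: bij_betw_def)
  then obtain x where x: "x \<in> carrier R" "(\<lambda>i\<in>{..<n}. f i) = (\<lambda>i\<in>{..<n}. pr i x)" by auto
  have "pr i x = f i" if "i < n" for i using fun_cong[OF x(2), of i] that by simp
  then show ?thesis using x(1) by blast
qed

lemma tuple_inj: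
  assumes "x \<in> carrier R" "y \<in> carrier R" "\<And>i. i < n \<Longrightarrow> pr i x = pr i y"
  shows "x = y"
proof -
  have "(\<lambda>i\<in>{..<n}. pr i x) = (\<lambda>i\<in>{..<n}. pr i y)" using assms(3) by (intro restrict_ext) simp
  then show ?thesis using tuple_bij assms(1,2) unfolding bij_betw_def inj_on_def by blast
qed

lemma proj_surj: "i < n \<Longrightarrow> pr i ` carrier R = carrier (K i)"
proof
  assume i: "i < n"
  show "pr i ` carrier R \<subseteq> carrier (K i)" using ring_hom_closed[OF proj_hom[OF i]] by blast
  show "carrier (K i) \<subseteq> pr i ` carrier R"
  proof
    fix k assume k: "k \<in> carrier (K i)"
    have closed: "(if j = i then k else \<one>\<^bsub>K j\<^esub>) \<in> carrier (K j)" if "j < n" for j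
      using k cring_factor[OF that] by (simp add: cring.cring_simprules(6))
    obtain x where "x \<in> carrier R" "\<forall>j<n. pr j x = (if j = i then k else \<one>\<^bsub>K j\<^esub>)"
      using tuple_surj[OF closed] by blast
    then show "k \<in> pr i ` carrier R" using i by force
  qed
qed

text \<open>If every projection had an element of its kernel outside the kernel of q, their
  product would lie in every kernel of a projection, hence be 0, yet not be killed by q.\<close>
lemma proj_kernel_subset:
  assumes "domain L" "q \<in> ring_hom R L"
  shows "\<exists>i<n. \<forall>a\<in>carrier R. pr i a = \<zero>\<^bsub>K i\<^esub> \<longrightarrow> q a = \<zero>\<^bsub>L\<^esub>"
proof (rule ccontr)
  interpret R: cring R by (rule cring_R)
  interpret L: domain L by fact
  interpret q: ring_hom_ring R L q
    using assms(2) by (simp add: ring_hom_ringI2 R.ring_axioms L.ring_axioms)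
  assume "\<not> ?thesis"
  then have "\<forall>i<n. \<exists>a. a \<in> carrier R \<and> pr i a = \<zero>\<^bsub>K i\<^esub> \<and> q a \<noteq> \<zero>\<^bsub>L\<^esub>" by blast
  then obtain a where a: "\<And>i. i < n \<Longrightarrow> a i \<in> carrier R \<and> pr i (a i) = \<zero>\<^bsub>K i\<^esub> \<and> q (a i) \<noteq> \<zero>\<^bsub>L\<^esub>"
    by metis
  have partial_products: "J \<subseteq> {..<n} \<Longrightarrow> \<exists>y\<in>carrier R. (\<forall>i\<in>J. pr i y = \<zero>\<^bsub>K i\<^esub>) \<and> q y \<noteq> \<zero>\<^bsub>L\<^esub>"
    if "finite J" for J
    using that
  proof (induction J rule: finite_induct)
    case empty
    show ?case using L.one_not_zero by (intro bexI[of _ "\<one>\<^bsub>R\<^esub>"]) auto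
  next
    case (insert i J)
    then obtain y where y: "y \<in> carrier R" "\<forall>j\<in>J. pr j y = \<zero>\<^bsub>K j\<^esub>" "q y \<noteq> \<zero>\<^bsub>L\<^esub>"
      by auto
    have i: "i < n" using insert.prems by simp
    have "pr j (y \<otimes>\<^bsub>R\<^esub> a i) = \<zero>\<^bsub>K j\<^esub>" if "j \<in> insert i J" for j
    proof -
      have j: "j < n" using that insert.prems by auto
      interpret K: cring "K j" by (rule cring_factor[OF j])
      have "pr j (y \<otimes>\<^bsub>R\<^esub> a i) = pr j y \<otimes>\<^bsub>K j\<^esub> pr j (a i)"
        using ring_hom_mult[OF proj_hom[OF j]] y(1) a[OF i] by simp
      moreover have "pr j y = \<zero>\<^bsub>K j\<^esub> \<or> pr j (a i) = \<zero>\<^bsub>K j\<^esub>" using that y(2) a[OF i] by auto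
      ultimately show ?thesis using y(1) a[OF i] ring_hom_closed[OF proj_hom[OF j]] by auto
    qed
    moreover have "q (y \<otimes>\<^bsub>R\<^esub> a i) = q y \<otimes>\<^bsub>L\<^esub> q (a i)" using y(1) a[OF i] by simp
    then have "q (y \<otimes>\<^bsub>R\<^esub> a i) \<noteq> \<zero>\<^bsub>L\<^esub>"
      using y a[OF i] L.integral[of "q y" "q (a i)"] by force
    ultimately show ?case using y(1) a[OF i] by blast
  qed
  obtain y where y: "y \<in> carrier R" "\<forall>i<n. pr i y = \<zero>\<^bsub>K i\<^esub>" "q y \<noteq> \<zero>\<^bsub>L\<^esub>"
    using partial_products[of "{..<n}"] by auto
  have "y = \<zero>\<^bsub>R\<^esub>"
  proof (rule tuple_inj[OF y(1) R.zero_closed])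
    fix i assume i: "i < n"
    interpret K: cring "K i" by (rule cring_factor[OF i])
    show "pr i y = pr i \<zero>\<^bsub>R\<^esub>"
      using y(2) i ring_hom_zero[OF proj_hom[OF i] R.ring_axioms K.ring_axioms] by simp
  qed
  then show False using y(3) by simp
qed

end

locale field_product_cone = ring_product_cone +
  assumes field_factor: "i < n \<Longrightarrow> field (K i)"
begin

lemma ker_rel_onto_domain:
  assumes "domain L" "q \<in> ring_hom R L"
  shows "\<exists>i<n. ker_rel R q = ker_rel R (pr i)"
proof -
  obtain i where i: "i < n" "\<forall>a\<in>carrier R. pr i a = \<zero>\<^bsub>K i\<^esub> \<longrightarrow> q a = \<zero>\<^bsub>L\<^esub>"
    using proj_kernel_subset[OF assms] by blast
  have "ker_rel R q = ker_rel R (pr i)"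
  proof (rule ker_rel_eq_of_kernel_subset[OF _ field_factor[OF i(1)] proj_hom[OF i(1)] proj_surj[OF i(1)] _ _ assms(2)])
    show "ring R" using cring_R by (rule cring.axioms(1))
    show "ring L" "\<one>\<^bsub>L\<^esub> \<noteq> \<zero>\<^bsub>L\<^esub>"
      using assms(1) by (simp_all add: domain.one_not_zero cring.axioms(1) domain.axioms(1))
  qed (use i(2) in blast)
  then show ?thesis using i(1) by blast
qed

lemma inj_on_ker_rel_proj: "inj_on (\<lambda>i. ker_rel R (pr i)) {..<n}"
proof (rule inj_onI, rule ccontr)
  fix i j assume ij: "i \<in> {..<n}" "j \<in> {..<n}" "ker_rel R (pr i) = ker_rel R (pr j)" "i \<noteq> j"
  interpret R: cring R by (rule cring_R)
  interpret Ki: field "K i" using field_factor ij(1) by simp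
  interpret Kj: field "K j" using field_factor ij(2) by simp
  have closed: "(if k = i then \<one>\<^bsub>K k\<^esub> else \<zero>\<^bsub>K k\<^esub>) \<in> carrier (K k)" if "k < n" for k
    using cring_factor[OF that] by (simp add: cring.cring_simprules(2,6))
  obtain e where e: "e \<in> carrier R" "\<forall>k<n. pr k e = (if k = i then \<one>\<^bsub>K k\<^esub> else \<zero>\<^bsub>K k\<^esub>)"
    using tuple_surj[OF closed] by blast
  have "pr j e = pr j \<zero>\<^bsub>R\<^esub>"
    using e ij ring_hom_zero[OF proj_hom R.ring_axioms Kj.ring_axioms] by simp
  then have "(e, \<zero>\<^bsub>R\<^esub>) \<in> ker_rel R (pr i)" using ij(3) e(1) by (simp add: ker_rel_def)
  then have "\<one>\<^bsub>K i\<^esub> = \<zero>\<^bsub>K i\<^esub>"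
    using e ij(1) ring_hom_zero[OF proj_hom R.ring_axioms Ki.ring_axioms] by (simp add: ker_rel_def)
  then show False by simp
qed

end

definition field_kernels :: "nat ring \<Rightarrow> (nat \<times> nat) set set" where
  "field_kernels R = {\<pi>. \<exists>q (K :: nat ring). field K \<and> q \<in> ring_hom R K \<and>
                          q ` carrier R = carrier K \<and> \<pi> = ker_rel R q}"

lemma field_kernels_eq:
  fixes R :: "nat ring" and K :: "nat \<Rightarrow> nat ring"
  assumes "field_product_cone R n K pr"
  shows "field_kernels R = (\<lambda>i. ker_rel R (pr i)) ` {..<n}"
proof -
  interpret field_product_cone R n K pr by fact
  show ?thesis
  proof
    show "(\<lambda>i. ker_rel R (pr i)) ` {..<n} \<subseteq> field_kernels R"
      unfolding field_kernels_def using field_factor proj_hom proj_surj by blast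
    show "field_kernels R \<subseteq> (\<lambda>i. ker_rel R (pr i)) ` {..<n}"
    proof
      fix \<pi> assume "\<pi> \<in> field_kernels R"
      then obtain q and L :: "nat ring" where q: "field L" "q \<in> ring_hom R L" "\<pi> = ker_rel R q"
        unfolding field_kernels_def by blast
      then obtain i where "i < n" "ker_rel R q = ker_rel R (pr i)"
        using ker_rel_onto_domain[of L q] field.axioms(1) by blast
      then show "\<pi> \<in> (\<lambda>i. ker_rel R (pr i)) ` {..<n}" using q(3) by blast
    qed
  qed
qed

section \<open>Product-preserving functors\<close>

lemma functor_map_closed:
  assumes "is_functor Xo Xm" "cring R" "cring S" "f \<in> ring_hom R S" "x \<in> Xo R"
  shows "Xm R S f x \<in> Xo S"
proof -
  have "\<forall>R S f. cring R \<and> cring S \<and> f \<in> ring_hom R S \<longrightarrow> Xm R S f \<in> Xo R \<rightarrow> Xo S"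
    using assms(1) unfolding is_functor_def by (rule conjunct1)
  then have "Xm R S f \<in> Xo R \<rightarrow> Xo S" using assms(2-4) by simp
  then show ?thesis using assms(5) by (rule funcset_mem)
qed

lemma functor_map_cong:
  assumes "is_functor Xo Xm" "cring R" "cring S" "f \<in> ring_hom R S" "g \<in> ring_hom R S"
    "\<And>a. a \<in> carrier R \<Longrightarrow> f a = g a" "x \<in> Xo R"
  shows "Xm R S f x = Xm R S g x"
proof -
  have "\<forall>R S f g. cring R \<and> cring S \<and> f \<in> ring_hom R S \<and> g \<in> ring_hom R S \<and>
         (\<forall>a\<in>carrier R. f a = g a) \<longrightarrow> (\<forall>x\<in>Xo R. Xm R S f x = Xm R S g x)"
    using assms(1) unfolding is_functor_def by (elim conjE)
  then show ?thesis using assms(2-7) by simp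
qed

lemma functor_map_comp:
  assumes "is_functor Xo Xm" "cring R" "cring S" "cring T" "f \<in> ring_hom R S" "g \<in> ring_hom S T"
    "x \<in> Xo R"
  shows "Xm R T (g \<circ> f) x = Xm S T g (Xm R S f x)"
proof -
  have "\<forall>R S T f g. cring R \<and> cring S \<and> cring T \<and> f \<in> ring_hom R S \<and> g \<in> ring_hom S T
         \<longrightarrow> (\<forall>x\<in>Xo R. Xm R T (g \<circ> f) x = Xm S T g (Xm R S f x))"
    using assms(1) unfolding is_functor_def by (elim conjE)
  then show ?thesis using assms(2-7) by simp
qed

lemma preserves_terminal:
  assumes "preserves_products Xo Xm" "cring T" "card (carrier T) = 1"
  shows "\<exists>y. Xo T = {y}"
  using conjunct1[OF assms(1)[unfolded preserves_products_def]] assms(2,3) by simp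

lemma preserves_binary_product:
  assumes "preserves_products Xo Xm" "cring R" "cring R1" "cring R2"
    "p1 \<in> ring_hom R R1" "p2 \<in> ring_hom R R2"
    "bij_betw (\<lambda>x. (p1 x, p2 x)) (carrier R) (carrier R1 \<times> carrier R2)"
  shows "bij_betw (\<lambda>x. (Xm R R1 p1 x, Xm R R2 p2 x)) (Xo R) (Xo R1 \<times> Xo R2)"
  using conjunct2[OF assms(1)[unfolded preserves_products_def]] assms(2-7) by simp

definition PiE_cons :: "nat \<Rightarrow> 'a \<times> (nat \<Rightarrow> 'a) \<Rightarrow> nat \<Rightarrow> 'a" where
  "PiE_cons n = (\<lambda>(a, t). \<lambda>i\<in>{..<Suc n}. if i = 0 then a else t (i - 1))"

lemma PiE_cons_0: "PiE_cons n (a, t) 0 = a"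
  by (simp add: PiE_cons_def)

lemma PiE_cons_Suc: "j < n \<Longrightarrow> PiE_cons n (a, t) (Suc j) = t j"
  by (simp add: PiE_cons_def)

lemma bij_betw_PiE_cons:
  "bij_betw (PiE_cons n) (A 0 \<times> PiE {..<n} (\<lambda>j. A (Suc j))) (PiE {..<Suc n} A)"
proof (rule bij_betw_byWitness[where f' = "\<lambda>f. (f 0, \<lambda>j\<in>{..<n}. f (Suc j))"])
  have "(PiE_cons n (a, t) 0, \<lambda>j\<in>{..<n}. PiE_cons n (a, t) (Suc j)) = (a, t)"
    if "t \<in> PiE {..<n} (\<lambda>j. A (Suc j))" for a t
  proof -
    have "(\<lambda>j\<in>{..<n}. PiE_cons n (a, t) (Suc j)) = restrict t {..<n}"
      by (intro restrict_ext) (simp add: PiE_cons_Suc)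
    then show ?thesis using PiE_restrict[OF that] by (simp add: PiE_cons_0)
  qed
  then show "\<forall>p\<in>A 0 \<times> PiE {..<n} (\<lambda>j. A (Suc j)).
      (PiE_cons n p 0, \<lambda>j\<in>{..<n}. PiE_cons n p (Suc j)) = p"
    by auto
  show "\<forall>f\<in>PiE {..<Suc n} A. PiE_cons n (f 0, \<lambda>j\<in>{..<n}. f (Suc j)) = f"
  proof
    fix f assume f: "f \<in> PiE {..<Suc n} A"
    show "PiE_cons n (f 0, \<lambda>j\<in>{..<n}. f (Suc j)) = f"
    proof (rule extensionalityI[of _ "{..<Suc n}"])
      show "PiE_cons n (f 0, \<lambda>j\<in>{..<n}. f (Suc j)) \<in> extensional {..<Suc n}"
        by (simp add: PiE_cons_def)
      show "f \<in> extensional {..<Suc n}" using f by (simp add: PiE_def)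
      fix i assume "i \<in> {..<Suc n}"
      then show "PiE_cons n (f 0, \<lambda>j\<in>{..<n}. f (Suc j)) i = f i"
        by (cases i) (simp_all add: PiE_cons_def)
    qed
  qed
  show "PiE_cons n ` (A 0 \<times> PiE {..<n} (\<lambda>j. A (Suc j))) \<subseteq> PiE {..<Suc n} A"
  proof (rule image_subsetI)
    fix p assume "p \<in> A 0 \<times> PiE {..<n} (\<lambda>j. A (Suc j))"
    then obtain a t where p: "p = (a, t)" "a \<in> A 0" "t \<in> PiE {..<n} (\<lambda>j. A (Suc j))"
      by auto
    have "PiE_cons n (a, t) i \<in> A i" if "i < Suc n" for i
      using p(2) PiE_mem[OF p(3)] that by (cases i) (simp_all add: PiE_cons_0 PiE_cons_Suc)
    then show "PiE_cons n p \<in> PiE {..<Suc n} A"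
      by (simp add: p PiE_cons_def restrict_PiE_iff)
  qed
  show "(\<lambda>f. (f 0, \<lambda>j\<in>{..<n}. f (Suc j))) ` PiE {..<Suc n} A \<subseteq> A 0 \<times> PiE {..<n} (\<lambda>j. A (Suc j))"
  proof (rule image_subsetI)
    fix f assume f: "f \<in> PiE {..<Suc n} A"
    have "f 0 \<in> A 0" "\<forall>j\<in>{..<n}. f (Suc j) \<in> A (Suc j)" using PiE_mem[OF f] by auto
    then show "(f 0, \<lambda>j\<in>{..<n}. f (Suc j)) \<in> A 0 \<times> PiE {..<n} (\<lambda>j. A (Suc j))"
      by (simp add: restrict_PiE_iff)
  qed
qed

lemma (in ring_product_cone) head_tail_bij:
  assumes "n = Suc m"
  shows "bij_betw (\<lambda>x. (pr 0 x, \<lambda>j\<in>{..<m}. pr (Suc j) x)) (carrier R)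
    (carrier (K 0) \<times> PiE {..<m} (\<lambda>j. carrier (K (Suc j))))"
proof (rule iffD2[OF bij_betw_comp_iff2[OF bij_betw_PiE_cons[of m "\<lambda>i. carrier (K i)"]]])
  show "(\<lambda>x. (pr 0 x, \<lambda>j\<in>{..<m}. pr (Suc j) x)) ` carrier R
      \<subseteq> carrier (K 0) \<times> PiE {..<m} (\<lambda>j. carrier (K (Suc j)))"
  proof (rule image_subsetI)
    fix x assume "x \<in> carrier R"
    then show "(pr 0 x, \<lambda>j\<in>{..<m}. pr (Suc j) x) \<in> carrier (K 0) \<times> PiE {..<m} (\<lambda>j. carrier (K (Suc j)))"
      using ring_hom_closed[OF proj_hom] assms by (simp add: restrict_PiE_iff)
  qed
  have "PiE_cons m \<circ> (\<lambda>x. (pr 0 x, \<lambda>j\<in>{..<m}. pr (Suc j) x)) = (\<lambda>x. \<lambda>i\<in>{..<Suc m}. pr i x)"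
    by (auto simp: PiE_cons_def fun_eq_iff)
  then show "bij_betw (PiE_cons m \<circ> (\<lambda>x. (pr 0 x, \<lambda>j\<in>{..<m}. pr (Suc j) x))) (carrier R)
      (PiE {..<Suc m} (\<lambda>i. carrier (K i)))"
    using tuple_bij unfolding assms by (simp only:)
qed

definition tuple_code :: "nat \<Rightarrow> (nat \<Rightarrow> nat) \<Rightarrow> nat" where
  "tuple_code n f = list_encode (map f [0..<n])"

lemma inj_on_tuple_code: "inj_on (tuple_code n) (PiE {..<n} B)"
proof (rule inj_onI)
  fix f g assume fg: "f \<in> PiE {..<n} B" "g \<in> PiE {..<n} B" "tuple_code n f = tuple_code n g"
  then have "\<forall>i<n. f i = g i" unfolding tuple_code_def by (simp add: list_encode_eq map_eq_conv)
  then show "f = g" using fg(1,2) by (intro extensionalityI[of _ "{..<n}"]) (auto simp: PiE_def)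
qed

text \<open>The tail of the product is realised as a ring on naturals, via tuple codes, so that the
  functor can be applied to it.\<close>
lemma split_product_cone:
  fixes R :: "nat ring" and K :: "nat \<Rightarrow> nat ring"
  assumes "ring_product_cone R (Suc n) K pr"
  obtains q and R' :: "nat ring" and p' where "q \<in> ring_hom R R'"
    "bij_betw (\<lambda>x. (pr 0 x, q x)) (carrier R) (carrier (K 0) \<times> carrier R')"
    "ring_product_cone R' n (\<lambda>j. K (Suc j)) p'"
    "\<And>x j. x \<in> carrier R \<Longrightarrow> j < n \<Longrightarrow> p' j (q x) = pr (Suc j) x"
proof -
  interpret ring_product_cone R "Suc n" K pr by fact
  define T where "T = ring_prod n (\<lambda>j. K (Suc j))"
  have cring_T: "cring T" unfolding T_def by (rule cring_ring_prod) (simp add: cring_factor)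
  have inj_code: "inj_on (tuple_code n) (carrier T)" by (simp add: T_def inj_on_tuple_code)
  define R' where "R' = transport_ring (tuple_code n) T"
  define decode where "decode = inv_into (carrier T) (tuple_code n)"
  define tail where "tail = (\<lambda>x. \<lambda>j\<in>{..<n}. pr (Suc j) x)"
  define p' where "p' = (\<lambda>j c. decode c j)"
  have tail_hom: "tail \<in> ring_hom R T"
    using ring_hom_closed[OF proj_hom] proj_hom unfolding tail_def T_def
    by (auto intro!: ring_hom_memI simp: ring_prod_def ring_hom_mult ring_hom_add ring_hom_one)
  have code_hom: "tuple_code n \<in> ring_hom T R'"
    unfolding R'_def by (rule transport_ring_hom[OF inj_code cring.axioms(1)[OF cring_T]])
  have decode_hom: "decode \<in> ring_hom R' T"
    unfolding R'_def decode_def by (rule transport_ring_inv_hom[OF inj_code cring.axioms(1)[OF cring_T]])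
  have decode_bij: "bij_betw decode (carrier R') (carrier T)"
    unfolding R'_def decode_def using inj_code by (simp add: bij_betw_inv_into inj_on_imp_bij_betw)
  have tail_decode: "p' j (tuple_code n (tail x)) = pr (Suc j) x" if "x \<in> carrier R" "j < n" for x j
    using that ring_hom_closed[OF tail_hom] inj_code unfolding p'_def decode_def tail_def by simp
  show thesis
  proof
    show "tuple_code n \<circ> tail \<in> ring_hom R R'" by (rule ring_hom_trans[OF tail_hom code_hom])
    show "p' j ((tuple_code n \<circ> tail) x) = pr (Suc j) x" if "x \<in> carrier R" "j < n" for x j
      using tail_decode[OF that] by simp
    show "ring_product_cone R' n (\<lambda>j. K (Suc j)) p'"
    proof (rule ring_product_cone.intro)
      show "cring R'" unfolding R'_def by (rule cring_transport_ring[OF inj_code cring_T])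
      show "cring (K (Suc j))" if "j < n" for j using cring_factor that by simp
      show "p' j \<in> ring_hom R' (K (Suc j))" if "j < n" for j
        using ring_hom_trans[OF decode_hom ring_prod_proj_hom[OF that, of "\<lambda>j. K (Suc j)", folded T_def]]
        by (simp add: p'_def comp_def)
      have "decode c = (\<lambda>j\<in>{..<n}. p' j c)" if "c \<in> carrier R'" for c
      proof -
        have "decode c \<in> PiE {..<n} (\<lambda>j. carrier (K (Suc j)))"
          using bij_betwE[OF decode_bij] that by (simp add: T_def)
        then show ?thesis using PiE_restrict by (fastforce simp: p'_def)
      qed
      then show "bij_betw (\<lambda>c. \<lambda>j\<in>{..<n}. p' j c) (carrier R') (PiE {..<n} (\<lambda>j. carrier (K (Suc j))))"
        using bij_betw_cong[of "carrier R'" decode "\<lambda>c. \<lambda>j\<in>{..<n}. p' j c"] decode_bij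
        by (simp add: T_def)
    qed
    have head_tail: "bij_betw (\<lambda>x. (pr 0 x, tail x)) (carrier R) (carrier (K 0) \<times> carrier T)"
      using head_tail_bij[OF refl] by (simp add: T_def tail_def)
    have "bij_betw (tuple_code n) (carrier T) (carrier R')"
      using inj_code by (simp add: R'_def inj_on_imp_bij_betw)
    from bij_betw_trans[OF head_tail bij_betw_map_prod[OF bij_betw_id this]]
    show "bij_betw (\<lambda>x. (pr 0 x, (tuple_code n \<circ> tail) x)) (carrier R) (carrier (K 0) \<times> carrier R')"
      by (simp add: comp_def)
  qed
qed

lemma preserves_finite_product:
  fixes Xo :: "nat ring \<Rightarrow> 'x set" and R :: "nat ring" and K :: "nat \<Rightarrow> nat ring"
  assumes F: "is_functor Xo Xm" and P: "preserves_products Xo Xm"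
    and "ring_product_cone R n K pr"
  shows "bij_betw (\<lambda>y. \<lambda>i\<in>{..<n}. Xm R (K i) (pr i) y) (Xo R) (PiE {..<n} (\<lambda>i. Xo (K i)))"
  using assms(3)
proof (induction n arbitrary: R K pr)
  case 0
  interpret ring_product_cone R 0 K pr by fact
  have "card (carrier R) = 1" using bij_betw_same_card[OF tuple_bij] by simp
  then obtain y where "Xo R = {y}" using preserves_terminal[OF P cring_R] by blast
  then show ?case by (simp add: bij_betw_def)
next
  case (Suc n)
  interpret ring_product_cone R "Suc n" K pr by fact
  show ?case
  proof (rule split_product_cone[OF Suc.prems])
  fix q and R' :: "nat ring" and p'
  assume q: "q \<in> ring_hom R R'"
    and split: "bij_betw (\<lambda>x. (pr 0 x, q x)) (carrier R) (carrier (K 0) \<times> carrier R')"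
    and tail: "ring_product_cone R' n (\<lambda>j. K (Suc j)) p'"
    and tail_q: "\<And>x j. x \<in> carrier R \<Longrightarrow> j < n \<Longrightarrow> p' j (q x) = pr (Suc j) x"
  interpret tail: ring_product_cone R' n "\<lambda>j. K (Suc j)" p' by (rule tail)
  have X_split: "bij_betw (\<lambda>y. (Xm R (K 0) (pr 0) y, Xm R R' q y)) (Xo R) (Xo (K 0) \<times> Xo R')"
    by (rule preserves_binary_product[OF P cring_R cring_factor tail.cring_R proj_hom q split]) simp_all
  have X_tail: "bij_betw (\<lambda>z. \<lambda>j\<in>{..<n}. Xm R' (K (Suc j)) (p' j) z) (Xo R')
      (PiE {..<n} (\<lambda>j. Xo (K (Suc j))))"
    by (rule Suc.IH[OF tail])
  have tail_map: "Xm R' (K (Suc j)) (p' j) (Xm R R' q y) = Xm R (K (Suc j)) (pr (Suc j)) y"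
    if "y \<in> Xo R" "j < n" for y j
  proof -
    have "Xm R' (K (Suc j)) (p' j) (Xm R R' q y) = Xm R (K (Suc j)) (p' j \<circ> q) y"
      using functor_map_comp[OF F cring_R tail.cring_R tail.cring_factor q tail.proj_hom that(1)] that(2)
      by simp
    also have "\<dots> = Xm R (K (Suc j)) (pr (Suc j)) y"
      using that ring_hom_trans[OF q tail.proj_hom] tail_q
      by (intro functor_map_cong[OF F cring_R cring_factor]) (simp_all add: proj_hom)
    finally show ?thesis .
  qed
  have bij: "bij_betw (PiE_cons n \<circ> (map_prod id (\<lambda>z. \<lambda>j\<in>{..<n}. Xm R' (K (Suc j)) (p' j) z)
      \<circ> (\<lambda>y. (Xm R (K 0) (pr 0) y, Xm R R' q y)))) (Xo R) (PiE {..<Suc n} (\<lambda>i. Xo (K i)))"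
    by (rule bij_betw_trans[OF bij_betw_trans[OF X_split bij_betw_map_prod[OF bij_betw_id X_tail]]
          bij_betw_PiE_cons])
  have eq: "(PiE_cons n \<circ> (map_prod id (\<lambda>z. \<lambda>j\<in>{..<n}. Xm R' (K (Suc j)) (p' j) z)
      \<circ> (\<lambda>y. (Xm R (K 0) (pr 0) y, Xm R R' q y)))) y = (\<lambda>i\<in>{..<Suc n}. Xm R (K i) (pr i) y)"
    if "y \<in> Xo R" for y
  proof (rule ext)
    fix i
    show "(PiE_cons n \<circ> (map_prod id (\<lambda>z. \<lambda>j\<in>{..<n}. Xm R' (K (Suc j)) (p' j) z)
      \<circ> (\<lambda>y. (Xm R (K 0) (pr 0) y, Xm R R' q y)))) y i = (\<lambda>i\<in>{..<Suc n}. Xm R (K i) (pr i) y) i"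
      using tail_map[OF that] by (cases i) (simp_all add: PiE_cons_def)
  qed
  show ?case by (rule iffD1[OF bij_betw_cong[OF eq] bij])
  qed
qed

section \<open>Orbits and cartesian decompositions\<close>

lemma self_in_Sn_orbit: "xs \<in> Sn_orbit xs"
  unfolding Sn_orbit_def by (rule CollectI, rule exI[of _ id]) (simp add: permutes_id)

lemma Sn_orbit_permute_list:
  assumes t: "t permutes {..<length xs}"
  shows "Sn_orbit (permute_list t xs) = Sn_orbit xs"
proof
  show "Sn_orbit (permute_list t xs) \<subseteq> Sn_orbit xs"
  proof
    fix ys assume "ys \<in> Sn_orbit (permute_list t xs)"
    then obtain s where s: "s permutes {..<length xs}" "ys = permute_list s (permute_list t xs)"
      unfolding Sn_orbit_def by auto
    have "ys = permute_list (t \<circ> s) xs" using s permute_list_compose[of s xs t] by simp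
    moreover have "t \<circ> s permutes {..<length xs}" using permutes_compose[OF s(1) t] .
    ultimately show "ys \<in> Sn_orbit xs" unfolding Sn_orbit_def by blast
  qed
  show "Sn_orbit xs \<subseteq> Sn_orbit (permute_list t xs)"
  proof
    fix ys assume "ys \<in> Sn_orbit xs"
    then obtain s where s: "s permutes {..<length xs}" "ys = permute_list s xs"
      unfolding Sn_orbit_def by auto
    have u: "inv_into UNIV t \<circ> s permutes {..<length xs}" using permutes_compose[OF s(1) permutes_inv[OF t]] .
    have "permute_list (inv_into UNIV t \<circ> s) (permute_list t xs) = permute_list (t \<circ> (inv_into UNIV t \<circ> s)) xs"
      using permute_list_compose[OF u, of t] by simp
    also have "t \<circ> (inv_into UNIV t \<circ> s) = s" using permutes_inverses(1)[OF t] by (auto simp: fun_eq_iff)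
    finally have "ys = permute_list (inv_into UNIV t \<circ> s) (permute_list t xs)" using s by (simp add: comp_def)
    then show "ys \<in> Sn_orbit (permute_list t xs)" using u unfolding Sn_orbit_def by auto
  qed
qed

lemma Sn_orbit_eq_if_mset_eq:
  assumes "mset xs = mset ys"
  shows "Sn_orbit xs = Sn_orbit ys"
proof -
  obtain p where p: "p permutes {..<length ys}" "permute_list p ys = xs"
    using mset_eq_permutation[OF assms] by blast
  show ?thesis using Sn_orbit_permute_list[OF p(1)] p(2) by simp
qed

lemma image_map_Sn_orbit: "map g ` Sn_orbit xs = Sn_orbit (map g xs)"
proof
  show "map g ` Sn_orbit xs \<subseteq> Sn_orbit (map g xs)"
  proof
    fix ys assume "ys \<in> map g ` Sn_orbit xs"
    then obtain t where t: "t permutes {..<length xs}" "ys = map g (permute_list t xs)"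
      unfolding Sn_orbit_def by auto
    then have "ys = permute_list t (map g xs)" by (simp add: permute_list_map)
    then show "ys \<in> Sn_orbit (map g xs)" using t(1) unfolding Sn_orbit_def by auto
  qed
  show "Sn_orbit (map g xs) \<subseteq> map g ` Sn_orbit xs"
  proof
    fix ys assume "ys \<in> Sn_orbit (map g xs)"
    then obtain t where t: "t permutes {..<length xs}" "ys = permute_list t (map g xs)"
      unfolding Sn_orbit_def by auto
    then have "ys = map g (permute_list t xs)" by (simp add: permute_list_map)
    moreover have "permute_list t xs \<in> Sn_orbit xs" using t(1) unfolding Sn_orbit_def by auto
    ultimately show "ys \<in> map g ` Sn_orbit xs" by blast
  qed
qed

lemma Sn_orbit_eq_imp_nth:
  assumes "Sn_orbit xs = Sn_orbit ys"
  shows "\<exists>t. t permutes {..<length ys} \<and> length xs = length ys \<and> (\<forall>j<length xs. xs ! j = ys ! t j)"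
proof -
  obtain t where t: "t permutes {..<length ys}" "xs = permute_list t ys"
    using self_in_Sn_orbit[of xs] assms unfolding Sn_orbit_def by auto
  then show ?thesis using permute_list_nth[OF t(1)] by auto
qed

lemma in_listset_iff: "xs \<in> listset As \<longleftrightarrow> length xs = length As \<and> (\<forall>i<length As. xs ! i \<in> As ! i)"
proof (induction As arbitrary: xs)
  case (Cons A As)
  then show ?case by (cases xs) (auto simp: set_Cons_def nth_Cons split: nat.splits)
qed simp

lemma bij_betw_listset_quotients_PiE:
  assumes fin: "finite S" and sub: "\<And>\<pi>. \<pi> \<in> set L \<Longrightarrow> \<pi> \<subseteq> S \<times> S"
  shows "bij_betw (\<lambda>xs. \<lambda>j\<in>{..<length L}. set_encode (xs ! j)) (listset (map (\<lambda>\<pi>. S // \<pi>) L))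
           (PiE {..<length L} (\<lambda>j. enc_classes S (L ! j)))"
proof (rule bij_betw_byWitness[where f' = "\<lambda>f. map (\<lambda>j. set_decode (f j)) [0..<length L]"])
  have finite_class: "finite Z" if "j < length L" "Z \<in> S // (L ! j)" for j Z
    using that sub[of "L ! j"] fin unfolding quotient_def by (auto intro: finite_subset)
  have decode: "set_decode c \<in> S // (L ! j)" if "j < length L" "c \<in> enc_classes S (L ! j)" for j c
    using that finite_class by (auto simp: enc_classes_def)
  show "\<forall>xs\<in>listset (map (\<lambda>\<pi>. S // \<pi>) L).
      map (\<lambda>j. set_decode ((\<lambda>j\<in>{..<length L}. set_encode (xs ! j)) j)) [0..<length L] = xs"
    using finite_class by (auto simp: in_listset_iff intro!: nth_equalityI)
  show "\<forall>f\<in>PiE {..<length L} (\<lambda>j. enc_classes S (L ! j)).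
      (\<lambda>j\<in>{..<length L}. set_encode (map (\<lambda>j. set_decode (f j)) [0..<length L] ! j)) = f"
    by (auto simp: PiE_def extensional_def fun_eq_iff)
  show "(\<lambda>xs. \<lambda>j\<in>{..<length L}. set_encode (xs ! j)) ` listset (map (\<lambda>\<pi>. S // \<pi>) L)
      \<subseteq> PiE {..<length L} (\<lambda>j. enc_classes S (L ! j))"
    by (rule image_subsetI) (simp add: restrict_PiE_iff in_listset_iff enc_classes_def)
  show "(\<lambda>f. map (\<lambda>j. set_decode (f j)) [0..<length L]) ` PiE {..<length L} (\<lambda>j. enc_classes S (L ! j))
      \<subseteq> listset (map (\<lambda>\<pi>. S // \<pi>) L)"
    using decode PiE_mem by (fastforce simp: in_listset_iff)
qed

lemma cartesian_decomposition_iff_class_codes: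
  assumes fin: "finite S" and sub: "\<And>\<pi>. \<pi> \<in> set L \<Longrightarrow> \<pi> \<subseteq> S \<times> S"
  shows "bij_betw (\<lambda>a. map (\<lambda>\<pi>. \<pi> `` {a}) L) S (listset (map (\<lambda>\<pi>. S // \<pi>) L)) \<longleftrightarrow>
    bij_betw (\<lambda>a. \<lambda>j\<in>{..<length L}. class_code (L ! j) a) S (PiE {..<length L} (\<lambda>j. enc_classes S (L ! j)))"
proof -
  note B = bij_betw_listset_quotients_PiE[OF fin sub]
  have img: "(\<lambda>a. map (\<lambda>\<pi>. \<pi> `` {a}) L) ` S \<subseteq> listset (map (\<lambda>\<pi>. S // \<pi>) L)"
    by (auto simp: in_listset_iff quotientI)
  have "bij_betw (\<lambda>a. map (\<lambda>\<pi>. \<pi> `` {a}) L) S (listset (map (\<lambda>\<pi>. S // \<pi>) L)) \<longleftrightarrow>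
    bij_betw ((\<lambda>xs. \<lambda>j\<in>{..<length L}. set_encode (xs ! j)) \<circ> (\<lambda>a. map (\<lambda>\<pi>. \<pi> `` {a}) L)) S
      (PiE {..<length L} (\<lambda>j. enc_classes S (L ! j)))"
    by (rule bij_betw_comp_iff2[OF B img])
  also have "(\<lambda>xs. \<lambda>j\<in>{..<length L}. set_encode (xs ! j)) \<circ> (\<lambda>a. map (\<lambda>\<pi>. \<pi> `` {a}) L) =
     (\<lambda>a. \<lambda>j\<in>{..<length L}. class_code (L ! j) a)"
    by (auto simp: fun_eq_iff class_code_def)
  finally show ?thesis .
qed

section \<open>Field quotients of a finite product of fields\<close>

lemma field_product_cone_epi:
  fixes R :: "nat ring" and K :: "nat \<Rightarrow> nat ring"
  assumes "field_product_cone R n K pr" "finite (carrier R)" "i < n"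
  shows "finite_ring_epi R (K i) (pr i)"
proof -
  interpret field_product_cone R n K pr by fact
  show ?thesis
    by (rule finite_ring_epi.intro[OF cring.axioms(1)[OF cring_R] cring.axioms(1)[OF cring_factor]
          proj_hom proj_surj assms(2)]) (use assms(3) in simp_all)
qed

lemma field_kernelE:
  fixes R :: "nat ring" and K :: "nat \<Rightarrow> nat ring"
  assumes "field_product_cone R n K pr" "finite (carrier R)" "\<pi> \<in> field_kernels R"
  obtains i where "i < n" "\<pi> = ker_rel R (pr i)" "finite_ring_epi R (K i) (pr i)"
proof -
  interpret field_product_cone R n K pr by fact
  obtain i where i: "i < n" "\<pi> = ker_rel R (pr i)" using assms(3) field_kernels_eq[OF assms(1)] by blast
  then show thesis using field_product_cone_epi[OF assms(1,2) i(1)] that by blast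
qed

lemma (in field_product_cone) kernel_list_index:
  assumes "distinct L" "set L = (\<lambda>i. ker_rel R (pr i)) ` {..<n}"
  obtains J where "\<And>i. i < n \<Longrightarrow> J i < length L \<and> L ! J i = ker_rel R (pr i)"
    and "\<And>j. j < length L \<Longrightarrow> \<exists>i<n. J i = j"
proof -
  have "\<forall>i<n. \<exists>j<length L. L ! j = ker_rel R (pr i)"
    using assms(2) by (auto simp: in_set_conv_nth[symmetric])
  then obtain J where J: "\<And>i. i < n \<Longrightarrow> J i < length L \<and> L ! J i = ker_rel R (pr i)"
    by metis
  have "\<exists>i<n. J i = j" if j: "j < length L" for j
  proof -
    obtain i where i: "i < n" "L ! j = ker_rel R (pr i)" using assms(2) nth_mem[OF j] by auto
    then have "J i = j"
      using nth_eq_iff_index_eq[OF assms(1) conjunct1[OF J[OF i(1)]] j] J[OF i(1)] by simp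
    then show ?thesis using i by blast
  qed
  then show thesis using J that by blast
qed

lemma class_code_tuple_bij:
  fixes R :: "nat ring" and K :: "nat \<Rightarrow> nat ring"
  assumes cone: "field_product_cone R n K pr" and finite: "finite (carrier R)"
    and L: "distinct L" "set L = field_kernels R"
  shows "bij_betw (\<lambda>x. \<lambda>j\<in>{..<length L}. class_code (L ! j) x) (carrier R)
    (PiE {..<length L} (\<lambda>j. enc_classes (carrier R) (L ! j)))" (is "bij_betw ?codes _ ?P")
proof -
  interpret field_product_cone R n K pr by fact
  obtain J where J: "\<And>i. i < n \<Longrightarrow> J i < length L \<and> L ! J i = ker_rel R (pr i)"
    and onto: "\<And>j. j < length L \<Longrightarrow> \<exists>i<n. J i = j"
    using kernel_list_index[OF L(1)] L(2) field_kernels_eq[OF cone] by metis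
  have same_class: "class_code (L ! J i) x = class_code (L ! J i) y \<longleftrightarrow> pr i x = pr i y"
    if "i < n" "x \<in> carrier R" "y \<in> carrier R" for i x y
    using J[OF that(1)] class_code_ker_rel_eq_iff[OF finite that(2,3)] by simp
  show ?thesis
  proof (rule bij_betw_imageI)
    show "inj_on ?codes (carrier R)"
    proof (rule inj_onI)
      fix x y assume xy: "x \<in> carrier R" "y \<in> carrier R" and eq: "?codes x = ?codes y"
      show "x = y"
      proof (rule tuple_inj[OF xy])
        fix i assume i: "i < n"
        have "class_code (L ! J i) x = class_code (L ! J i) y" using fun_cong[OF eq, of "J i"] J[OF i] by simp
        then show "pr i x = pr i y" using same_class[OF i xy] by simp
      qed
    qed
    show "?codes ` carrier R = ?P"
    proof
      show "?codes ` carrier R \<subseteq> ?P"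
        by (rule image_subsetI) (simp add: restrict_PiE_iff enc_classes_eq_image_class_code)
      show "?P \<subseteq> ?codes ` carrier R"
      proof
        fix g assume g: "g \<in> ?P"
        have "\<forall>i<n. \<exists>a\<in>carrier R. class_code (L ! J i) a = g (J i)"
          using PiE_mem[OF g] J by (fastforce simp: enc_classes_eq_image_class_code)
        then obtain a where a: "\<And>i. i < n \<Longrightarrow> a i \<in> carrier R \<and> class_code (L ! J i) (a i) = g (J i)"
          by metis
        have closed: "pr i (a i) \<in> carrier (K i)" if "i < n" for i
          using ring_hom_closed[OF proj_hom] a that by blast
        obtain y where y: "y \<in> carrier R" "\<forall>i<n. pr i y = pr i (a i)"
          using tuple_surj[OF closed] by blast
        have "class_code (L ! j) y = g j" if j: "j < length L" for j
        proof -
          obtain i where i: "i < n" "J i = j" using onto[OF j] by blast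
          have "class_code (L ! J i) y = class_code (L ! J i) (a i)"
            using same_class[OF i(1) y(1) conjunct1[OF a[OF i(1)]]] y(2) i(1) by simp
          then show ?thesis using a[OF i(1)] i(2) by simp
        qed
        then have "?codes y = g" using g by (auto simp: PiE_def extensional_def)
        then show "g \<in> ?codes ` carrier R" using y(1) by blast
      qed
    qed
  qed
qed

lemma field_product_cone_quotients:
  fixes R :: "nat ring" and K :: "nat \<Rightarrow> nat ring"
  assumes cone: "field_product_cone R n K pr" and finite: "finite (carrier R)"
    and L: "distinct L" "set L = field_kernels R"
  shows "field_product_cone R (length L) (\<lambda>j. quotient_ring R (L ! j)) (\<lambda>j. class_code (L ! j))"
proof -
  interpret field_product_cone R n K pr by fact
  obtain J where J: "\<And>i. i < n \<Longrightarrow> J i < length L \<and> L ! J i = ker_rel R (pr i)"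
    and onto: "\<And>j. j < length L \<Longrightarrow> \<exists>i<n. J i = j"
    using kernel_list_index[OF L(1)] L(2) field_kernels_eq[OF cone] by metis
  have field: "field (quotient_ring R (L ! j))"
    and hom: "class_code (L ! j) \<in> ring_hom R (quotient_ring R (L ! j))" if j: "j < length L" for j
  proof -
    obtain i where i: "i < n" "L ! j = ker_rel R (pr i)" using onto[OF j] J by blast
    note epi = field_product_cone_epi[OF cone finite i(1)]
    show "field (quotient_ring R (L ! j))"
      using finite_ring_epi.field_quotient_ring[OF epi field_factor[OF i(1)]] i(2) by simp
    show "class_code (L ! j) \<in> ring_hom R (quotient_ring R (L ! j))"
      using finite_ring_epi.class_code_ring_hom[OF epi] i(2) by simp
  qed
  show ?thesis
    using class_code_tuple_bij[OF cone finite L] field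
    by (intro field_product_cone.intro ring_product_cone.intro field_product_cone_axioms.intro
        cring_R field hom) (simp_all add: field.axioms(1) domain.axioms(1))
qed

text \<open>Any enumeration will do: only its S_n-orbit enters the isomorphism.\<close>
definition field_kernel_list :: "nat ring \<Rightarrow> (nat \<times> nat) set list" where
  "field_kernel_list R = (SOME L. distinct L \<and> set L = field_kernels R)"

lemma field_kernel_list:
  assumes "finite (field_kernels R)"
  shows "distinct (field_kernel_list R)" "set (field_kernel_list R) = field_kernels R"
proof -
  have "\<exists>L. distinct L \<and> set L = field_kernels R" using finite_distinct_list[OF assms] by metis
  then have "distinct (field_kernel_list R) \<and> set (field_kernel_list R) = field_kernels R"
    unfolding field_kernel_list_def by (rule someI_ex)
  then show "distinct (field_kernel_list R)" "set (field_kernel_list R) = field_kernels R" by auto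
qed

definition factor_struct ::
  "(nat ring \<Rightarrow> nat ring \<Rightarrow> (nat \<Rightarrow> nat) \<Rightarrow> 'x \<Rightarrow> 'x) \<Rightarrow> nat ring \<Rightarrow> 'x \<Rightarrow>
    (nat \<times> nat) set \<Rightarrow> (nat \<times> nat) set \<times> nat ring \<times> 'x" where
  "factor_struct Xm R x \<pi> = (\<pi>, quotient_ring R \<pi>, Xm R (quotient_ring R \<pi>) (class_code \<pi>) x)"

definition factor_orbit ::
  "(nat ring \<Rightarrow> nat ring \<Rightarrow> (nat \<Rightarrow> nat) \<Rightarrow> 'x \<Rightarrow> 'x) \<Rightarrow> nat ring \<times> 'x \<Rightarrow>
    ((nat \<times> nat) set \<times> nat ring \<times> 'x) list set" where
  "factor_orbit Xm z = Sn_orbit (map (factor_struct Xm (fst z) (snd z)) (field_kernel_list (fst z)))"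

lemma fst_factor_struct [simp]: "fst (factor_struct Xm R x \<pi>) = \<pi>"
  by (simp add: factor_struct_def)

locale Zsp_structure =
  fixes Xo :: "nat ring \<Rightarrow> 'x set" and p :: nat and S :: "nat set" and R :: "nat ring" and x :: 'x
  assumes in_Zsp: "(R, x) \<in> Zsp Xo p S" and finite_S: "finite S"
begin

lemma ring_on_R: "ring_on S R" and cring_R: "cring R" and in_Xo: "x \<in> Xo R"
  and carrier_R: "carrier R = S"
  using in_Zsp by (auto simp: Zsp_def ring_on_def)

lemma decomposition:
  obtains n and K :: "nat \<Rightarrow> nat ring" and pr
  where "field_product_cone R n K pr" "\<And>i. i < n \<Longrightarrow> algchar (K i) = p"
proof -
  obtain n and K :: "nat \<Rightarrow> nat ring" and pr where
    K: "\<forall>i<n. field (K i) \<and> finite (carrier (K i)) \<and> algchar (K i) = p \<and> pr i \<in> ring_hom R (K i)"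
    and bij: "bij_betw (\<lambda>x. \<lambda>i\<in>{..<n}. pr i x) (carrier R) (PiE {..<n} (\<lambda>i. carrier (K i)))"
    using in_Zsp unfolding Zsp_def fin_prod_fin_fields_def by blast
  have "field_product_cone R n K pr"
    using K by (intro field_product_cone.intro ring_product_cone.intro field_product_cone_axioms.intro
        cring_R bij) (simp_all add: field.axioms(1) domain.axioms(1))
  then show thesis using K that by blast
qed

lemma finite_R: "finite (carrier R)"
  using finite_S carrier_R by simp

lemma finite_field_kernels: "finite (field_kernels R)"
  by (rule decomposition) (simp add: field_kernels_eq)

abbreviation kernels :: "(nat \<times> nat) set list" where
  "kernels \<equiv> field_kernel_list R"

lemma distinct_kernels: "distinct kernels" and set_kernels: "set kernels = field_kernels R"
  using field_kernel_list[OF finite_field_kernels] by auto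

lemma quotient_cone:
  "field_product_cone R (length kernels) (\<lambda>j. quotient_ring R (kernels ! j)) (\<lambda>j. class_code (kernels ! j))"
  by (rule decomposition) (rule field_product_cone_quotients[OF _ finite_R distinct_kernels set_kernels])

lemma field_kernel_facts:
  assumes "\<pi> \<in> field_kernels R"
  shows "field (quotient_ring R \<pi>)" "class_code \<pi> \<in> ring_hom R (quotient_ring R \<pi>)"
    "algchar (quotient_ring R \<pi>) = p" "equiv S \<pi>"
proof -
  obtain n and K :: "nat \<Rightarrow> nat ring" and pr
    where cone: "field_product_cone R n K pr" and char: "\<And>i. i < n \<Longrightarrow> algchar (K i) = p"
    using decomposition by blast
  obtain i where i: "i < n" "\<pi> = ker_rel R (pr i)" and epi: "finite_ring_epi R (K i) (pr i)"
    using field_kernelE[OF cone finite_R assms] by blast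
  show "field (quotient_ring R \<pi>)"
    using finite_ring_epi.field_quotient_ring[OF epi] field_product_cone.field_factor[OF cone i(1)] i(2)
    by simp
  show "class_code \<pi> \<in> ring_hom R (quotient_ring R \<pi>)"
    using finite_ring_epi.class_code_ring_hom[OF epi] i(2) by simp
  show "algchar (quotient_ring R \<pi>) = p" "equiv S \<pi>"
    using finite_ring_epi.algchar_quotient_ring[OF epi] char[OF i(1)] equiv_ker_rel[of R] carrier_R i(2)
    by auto
qed

lemma factor_orbit_in_expD:
  assumes F: "is_functor Xo Xm"
  shows "factor_orbit Xm (R, x) \<in> expD (Fsp Xo p) S"
proof -
  interpret Q: field_product_cone R "length kernels" "\<lambda>j. quotient_ring R (kernels ! j)"
    "\<lambda>j. class_code (kernels ! j)" by (rule quotient_cone)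
  let ?ds = "map (factor_struct Xm R x) kernels"
  have "?ds \<in> DirPow (Fsp Xo p) S"
    unfolding DirPow_def
  proof (intro CollectI conjI ballI)
    fix d assume "d \<in> set ?ds"
    then obtain j where j: "j < length kernels" "d = factor_struct Xm R x (kernels ! j)"
      by (auto simp: in_set_conv_nth)
    have kernel: "kernels ! j \<in> field_kernels R" using j(1) nth_mem set_kernels by blast
    show "equiv S (fst d)" using field_kernel_facts(4)[OF kernel] j(2) by (simp add: factor_struct_def)
    have "Xm R (quotient_ring R (kernels ! j)) (class_code (kernels ! j)) x \<in> Xo (quotient_ring R (kernels ! j))"
      using functor_map_closed[OF F cring_R Q.cring_factor Q.proj_hom in_Xo] j(1) by simp
    then show "snd d \<in> Fsp Xo p (enc_classes S (fst d))"
      using j Q.field_factor field_kernel_facts(3)[OF kernel] ring_on_quotient_ring[of R] carrier_R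
      by (simp add: factor_struct_def Fsp_def)
  next
    have "bij_betw (\<lambda>a. \<lambda>j\<in>{..<length kernels}. class_code (kernels ! j) a) S
        (PiE {..<length kernels} (\<lambda>j. enc_classes S (kernels ! j)))"
      using Q.tuple_bij carrier_R by simp
    moreover have "\<pi> \<subseteq> S \<times> S" if "\<pi> \<in> set kernels" for \<pi>
      using field_kernel_facts(4) that set_kernels by (auto simp: equiv_def refl_on_def)
    ultimately have "bij_betw (\<lambda>a. map (\<lambda>\<pi>. \<pi> `` {a}) kernels) S (listset (map (\<lambda>\<pi>. S // \<pi>) kernels))"
      using cartesian_decomposition_iff_class_codes[OF finite_S] by blast
    then show "bij_betw (\<lambda>a. map (\<lambda>d. fst d `` {a}) ?ds) S (listset (map (\<lambda>d. S // fst d) ?ds))"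
      by (simp add: factor_struct_def comp_def)
  qed
  then show ?thesis unfolding factor_orbit_def expD_def by simp
qed

end

lemma Zsp_ring_eqI:
  assumes "Zsp_structure Xo p S R x" "Zsp_structure Xo p S R' x'"
    and same_quotients: "\<And>\<pi>. \<pi> \<in> field_kernels R \<Longrightarrow>
      \<pi> \<in> field_kernels R' \<and> quotient_ring R' \<pi> = quotient_ring R \<pi>"
  shows "R = R'"
proof -
  interpret Z: Zsp_structure Xo p S R x by fact
  interpret Z': Zsp_structure Xo p S R' x' by fact
  interpret Q: field_product_cone R "length Z.kernels" "\<lambda>j. quotient_ring R (Z.kernels ! j)"
    "\<lambda>j. class_code (Z.kernels ! j)" by (rule Z.quotient_cone)
  show ?thesis
  proof (rule ring_on_eqI_by_homs[OF Z.ring_on_R Z'.ring_on_R cring.axioms(1)[OF Z.cring_R]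
        cring.axioms(1)[OF Z'.cring_R] cring.axioms(1)[OF Q.cring_factor] Q.proj_hom])
    fix j assume "j < length Z.kernels"
    then have "Z.kernels ! j \<in> field_kernels R" using Z.set_kernels nth_mem by blast
    then show "class_code (Z.kernels ! j) \<in> ring_hom R' (quotient_ring R (Z.kernels ! j))"
      using Z'.field_kernel_facts(2) same_quotients by metis
  next
    show "a = b" if "a \<in> S" "b \<in> S"
      "\<And>j. j < length Z.kernels \<Longrightarrow> class_code (Z.kernels ! j) a = class_code (Z.kernels ! j) b" for a b
      using Q.tuple_inj that Z.carrier_R by simp
  qed
qed

lemma factor_orbit_inj:
  fixes Xo :: "nat ring \<Rightarrow> 'x set"
  assumes F: "is_functor Xo Xm" and P: "preserves_products Xo Xm"
    and Z: "Zsp_structure Xo p S R x" and Z': "Zsp_structure Xo p S R' x'"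
    and eq: "factor_orbit Xm (R, x) = factor_orbit Xm (R', x')"
  shows "(R, x) = (R', x')"
proof -
  interpret Z: Zsp_structure Xo p S R x by fact
  interpret Z': Zsp_structure Xo p S R' x' by fact
  define L where "L = Z.kernels"
  define L' where "L' = Z'.kernels"
  have "Sn_orbit (map (factor_struct Xm R x) L) = Sn_orbit (map (factor_struct Xm R' x') L')"
    using eq by (simp add: factor_orbit_def L_def L'_def)
  from Sn_orbit_eq_imp_nth[OF this] obtain t where t: "t permutes {..<length L'}" "length L = length L'"
    and nth: "\<forall>j<length L. map (factor_struct Xm R x) L ! j = map (factor_struct Xm R' x') L' ! t j"
    by auto
  have t_range: "t j < length L'" if "j < length L" for j using permutes_in_image[OF t(1)] that t(2) by simp
  have entry: "factor_struct Xm R x (L ! j) = factor_struct Xm R' x' (L' ! t j)" if "j < length L" for j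
    using nth that t_range[OF that] by simp
  have same_kernel: "L ! j = L' ! t j"
    and same_quotient: "quotient_ring R' (L ! j) = quotient_ring R (L ! j)" if "j < length L" for j
    using entry[OF that] unfolding factor_struct_def by auto
  have "R = R'"
  proof (rule Zsp_ring_eqI[OF Z Z'])
    fix \<pi> assume "\<pi> \<in> field_kernels R"
    then have "\<pi> \<in> set L" using Z.set_kernels by (simp add: L_def)
    then obtain j where "j < length L" "\<pi> = L ! j" by (auto simp: in_set_conv_nth)
    moreover have "L' ! t j \<in> field_kernels R'" using nth_mem[OF t_range] Z'.set_kernels \<open>j < length L\<close>
      by (simp add: L'_def)
    ultimately show "\<pi> \<in> field_kernels R' \<and> quotient_ring R' \<pi> = quotient_ring R \<pi>"
      using same_kernel same_quotient by simp
  qed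
  then have L': "L' = L" by (simp add: L_def L'_def)
  have "t j = j" if "j < length L" for j
    using same_kernel[OF that] t_range[OF that] that nth_eq_iff_index_eq[OF Z.distinct_kernels] L'
    by (simp add: L_def)
  then have "Xm R (quotient_ring R (L ! j)) (class_code (L ! j)) x = Xm R (quotient_ring R (L ! j)) (class_code (L ! j)) x'"
    if "j < length L" for j
    using entry[OF that] that L' \<open>R = R'\<close> by (simp add: factor_struct_def)
  then have same_X: "(\<lambda>j\<in>{..<length L}. Xm R (quotient_ring R (L ! j)) (class_code (L ! j)) x) =
      (\<lambda>j\<in>{..<length L}. Xm R (quotient_ring R (L ! j)) (class_code (L ! j)) x')"
    by (intro restrict_ext) simp
  interpret Q: field_product_cone R "length L" "\<lambda>j. quotient_ring R (L ! j)" "\<lambda>j. class_code (L ! j)"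
    unfolding L_def by (rule Z.quotient_cone)
  have "x' \<in> Xo R" using Z'.in_Xo \<open>R = R'\<close> by simp
  then have "x = x'"
    by (rule inj_onD[OF bij_betw_imp_inj_on[OF preserves_finite_product[OF F P Q.ring_product_cone_axioms]]
          same_X Z.in_Xo])
  then show ?thesis using \<open>R = R'\<close> by simp
qed

lemma ker_rel_class_code:
  assumes "equiv S \<pi>" "finite S" "carrier R = S"
  shows "ker_rel R (class_code \<pi>) = \<pi>"
proof -
  have sub: "\<pi> \<subseteq> S \<times> S" using assms(1) by (auto simp: equiv_def refl_on_def)
  have "finite (\<pi> `` {a})" for a using sub assms(2) by (auto intro: finite_subset)
  then have "(a, b) \<in> ker_rel R (class_code \<pi>) \<longleftrightarrow> a \<in> S \<and> b \<in> S \<and> \<pi> `` {a} = \<pi> `` {b}" for a b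
    unfolding ker_rel_def class_code_def using assms(3) by (simp add: set_encode_eq)
  then show ?thesis using eq_equiv_class_iff[OF assms(1)] sub by auto
qed

lemma ring_of_cartesian_decomposition:
  fixes K :: "nat \<Rightarrow> nat ring"
  assumes K: "\<And>j. j < length L \<Longrightarrow> field (K j)" "\<And>j. j < length L \<Longrightarrow> carrier (K j) = enc_classes S (L ! j)"
    and bij: "bij_betw (\<lambda>a. \<lambda>j\<in>{..<length L}. class_code (L ! j) a) S
      (PiE {..<length L} (\<lambda>j. enc_classes S (L ! j)))"
  obtains R :: "nat ring"
  where "ring_on S R" "field_product_cone R (length L) K (\<lambda>j. class_code (L ! j))"
proof -
  define n where "n = length L"
  define v where "v = (\<lambda>a. \<lambda>j\<in>{..<n}. class_code (L ! j) a)"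
  define P where "P = ring_prod n K"
  have cring_K: "cring (K j)" if "j < n" for j using K(1) that by (simp add: n_def field.axioms(1) domain.axioms(1))
  have cring_P: "cring P" unfolding P_def by (rule cring_ring_prod[OF cring_K])
  have "carrier P = PiE {..<length L} (\<lambda>j. enc_classes S (L ! j))"
    unfolding P_def n_def carrier_ring_prod by (rule PiE_cong) (simp add: K(2))
  then have v_bij: "bij_betw v S (carrier P)" using bij by (simp add: v_def n_def)
  define R where "R = transport_ring (inv_into S v) P"
  have inj: "inj_on (inv_into S v) (carrier P)" using v_bij bij_betw_inv_into bij_betw_imp_inj_on by blast
  have carrier_R: "carrier R = S"
    using bij_betw_inv_into[OF v_bij] by (simp add: R_def bij_betw_def)
  have cring_R: "cring R" unfolding R_def by (rule cring_transport_ring[OF inj cring_P])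
  have v_hom: "v \<in> ring_hom R P"
  proof (rule ring_hom_cong[OF _ _ cring.axioms(1)[OF cring_R]])
    show "inv_into (carrier P) (inv_into S v) \<in> ring_hom R P"
      unfolding R_def by (rule transport_ring_inv_hom[OF inj cring.axioms(1)[OF cring_P]])
    show "inv_into (carrier P) (inv_into S v) a = v a" if "a \<in> carrier R" for a
      using that carrier_R v_bij inv_into_inv_into_eq by (metis bij_betw_def)
  qed
  show thesis
  proof
    show "ring_on S R" using ring_on_transport_ring[of "inv_into S v" P] carrier_R by (simp add: R_def)
    show "field_product_cone R (length L) K (\<lambda>j. class_code (L ! j))"
    proof (intro field_product_cone.intro ring_product_cone.intro field_product_cone_axioms.intro
        cring_R K(1))
      show "cring (K j)" if "j < length L" for j using cring_K that by (simp add: n_def)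
      show "class_code (L ! j) \<in> ring_hom R (K j)" if "j < length L" for j
        using ring_hom_cong[OF ring_hom_trans[OF v_hom ring_prod_proj_hom[of j n K, folded P_def]] _
            cring.axioms(1)[OF cring_R]] that by (simp add: v_def n_def)
      show "bij_betw (\<lambda>x. \<lambda>j\<in>{..<length L}. class_code (L ! j) x) (carrier R)
          (PiE {..<length L} (\<lambda>j. carrier (K j)))"
        using v_bij carrier_R by (simp add: v_def P_def n_def)
    qed
  qed
qed

lemma class_code_cone_kernels:
  fixes R :: "nat ring" and K :: "nat \<Rightarrow> nat ring"
  assumes cone: "field_product_cone R (length L) K (\<lambda>j. class_code (L ! j))"
    and carrier: "carrier R = S" and finite: "finite S"
    and equiv: "\<And>j. j < length L \<Longrightarrow> equiv S (L ! j)"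
    and ring_on: "\<And>j. j < length L \<Longrightarrow> ring_on (carrier (K j)) (K j)"
  shows "\<And>j. j < length L \<Longrightarrow> quotient_ring R (L ! j) = K j"
    and "field_kernels R = set L" and "distinct L"
proof -
  interpret field_product_cone R "length L" K "\<lambda>j. class_code (L ! j)" by fact
  have ker: "ker_rel R (class_code (L ! j)) = L ! j" if "j < length L" for j
    using ker_rel_class_code[OF equiv[OF that] finite carrier] .
  show "quotient_ring R (L ! j) = K j" if j: "j < length L" for j
  proof -
    have "quotient_ring R (ker_rel R (class_code (L ! j))) = K j"
      by (rule quotient_ring_ker_rel_eqI[OF cring.axioms(1)[OF cring_R] cring.axioms(1)[OF cring_factor[OF j]]
            proj_hom[OF j] proj_surj[OF j] ring_on[OF j]]) (simp_all add: carrier finite ker[OF j])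
    then show ?thesis using ker[OF j] by simp
  qed
  have "(\<lambda>j. ker_rel R (class_code (L ! j))) ` {..<length L} = (!) L ` {..<length L}"
    using ker by (intro image_cong) auto
  also have "\<dots> = set L" using nth_image[of "length L" L] by (simp add: atLeast0LessThan)
  finally show "field_kernels R = set L" using field_kernels_eq[OF cone] by simp
  have "inj_on ((!) L) {..<length L}"
    by (rule iffD1[OF inj_on_cong inj_on_ker_rel_proj]) (simp add: ker)
  then show "distinct L" unfolding distinct_conv_nth inj_on_def by (metis lessThan_iff)
qed

lemma ring_of_DirPow:
  fixes Xo :: "nat ring \<Rightarrow> 'x set"
  assumes finite: "finite S" and ds: "ds \<in> DirPow (Fsp Xo p) S"
  defines "L \<equiv> map fst ds" and "K \<equiv> \<lambda>j. fst (snd (ds ! j))"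
  obtains R :: "nat ring" where "ring_on S R" "fin_prod_fin_fields p R"
    "field_product_cone R (length L) K (\<lambda>j. class_code (L ! j))"
    "field_kernels R = set L" "distinct L" "\<And>j. j < length L \<Longrightarrow> quotient_ring R (L ! j) = K j"
proof -
  have factor: "equiv S (L ! j) \<and> ring_on (enc_classes S (L ! j)) (K j) \<and> field (K j) \<and> algchar (K j) = p"
    if "j < length L" for j
  proof -
    have "ds ! j \<in> set ds" using that by (simp add: L_def)
    then show ?thesis using ds that unfolding DirPow_def Fsp_def L_def K_def by (auto simp: case_prod_beta)
  qed
  have carrier_K: "carrier (K j) = enc_classes S (L ! j)" if "j < length L" for j
    using factor[OF that] by (simp add: ring_on_def)
  have "\<pi> \<subseteq> S \<times> S" if "\<pi> \<in> set L" for \<pi>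
    using that factor by (auto simp: in_set_conv_nth equiv_def refl_on_def)
  moreover have "bij_betw (\<lambda>a. map (\<lambda>\<pi>. \<pi> `` {a}) L) S (listset (map (\<lambda>\<pi>. S // \<pi>) L))"
    using ds by (simp add: DirPow_def L_def comp_def)
  ultimately have codes_bij: "bij_betw (\<lambda>a. \<lambda>j\<in>{..<length L}. class_code (L ! j) a) S
      (PiE {..<length L} (\<lambda>j. enc_classes S (L ! j)))"
    using cartesian_decomposition_iff_class_codes[OF finite] by blast
  have field_K: "field (K j)" if "j < length L" for j using factor[OF that] by blast
  obtain R :: "nat ring" where ring_on_R: "ring_on S R"
    and cone: "field_product_cone R (length L) K (\<lambda>j. class_code (L ! j))"
    using ring_of_cartesian_decomposition[OF field_K carrier_K codes_bij] by blast
  interpret field_product_cone R "length L" K "\<lambda>j. class_code (L ! j)" by (rule cone)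
  have carrier_R: "carrier R = S" using ring_on_R by (simp add: ring_on_def)
  have "finite (carrier (K j))" if "j < length L" for j
    using carrier_K[OF that] finite by (simp add: enc_classes_eq_image_class_code)
  then have "fin_prod_fin_fields p R"
    unfolding fin_prod_fin_fields_def using factor proj_hom tuple_bij
    by (intro exI[of _ "length L"] exI[of _ K] exI[of _ "\<lambda>j. class_code (L ! j)"]) simp
  moreover have "\<And>j. j < length L \<Longrightarrow> quotient_ring R (L ! j) = K j" "field_kernels R = set L" "distinct L"
    using class_code_cone_kernels[OF cone carrier_R finite] factor carrier_K by simp_all
  ultimately show thesis using that ring_on_R cone by blast
qed

lemma factor_orbit_surj:
  fixes Xo :: "nat ring \<Rightarrow> 'x set"
  assumes F: "is_functor Xo Xm" and P: "preserves_products Xo Xm"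
    and finite: "finite S" and ds: "ds \<in> DirPow (Fsp Xo p) S"
  shows "\<exists>z\<in>Zsp Xo p S. factor_orbit Xm z = Sn_orbit ds"
proof -
  define L where "L = map fst ds"
  define K where "K = (\<lambda>j. fst (snd (ds ! j)))"
  define y where "y = (\<lambda>j. snd (snd (ds ! j)))"
  have y: "y j \<in> Xo (K j)" if "j < length L" for j
  proof -
    have "ds ! j \<in> set ds" using that by (simp add: L_def)
    then show ?thesis using ds unfolding DirPow_def Fsp_def y_def K_def by (auto simp: case_prod_beta)
  qed
  show ?thesis
  proof (rule ring_of_DirPow[OF finite ds, folded L_def K_def])
    fix R :: "nat ring"
    assume R: "ring_on S R" "fin_prod_fin_fields p R"
      and cone: "field_product_cone R (length L) K (\<lambda>j. class_code (L ! j))"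
      and kernels: "field_kernels R = set L" "distinct L"
      and quotients: "\<And>j. j < length L \<Longrightarrow> quotient_ring R (L ! j) = fst (snd (ds ! j))"
    interpret field_product_cone R "length L" K "\<lambda>j. class_code (L ! j)" by (rule cone)
    have "(\<lambda>j\<in>{..<length L}. y j) \<in> (\<lambda>x. \<lambda>j\<in>{..<length L}. Xm R (K j) (class_code (L ! j)) x) ` Xo R"
      using preserves_finite_product[OF F P ring_product_cone_axioms] y by (simp add: bij_betw_def)
    then obtain x where x: "x \<in> Xo R"
      "(\<lambda>j\<in>{..<length L}. Xm R (K j) (class_code (L ! j)) x) = (\<lambda>j\<in>{..<length L}. y j)"
      by auto
    have "map (factor_struct Xm R x) L = ds"
    proof (rule nth_equalityI)
      fix j assume "j < length (map (factor_struct Xm R x) L)"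
      then have j: "j < length L" by simp
      have "Xm R (K j) (class_code (L ! j)) x = y j" using fun_cong[OF x(2), of j] j by simp
      then show "map (factor_struct Xm R x) L ! j = ds ! j"
        using j quotients[OF j] by (simp add: factor_struct_def L_def K_def y_def)
    qed (simp add: L_def)
    moreover have "mset (field_kernel_list R) = mset L"
      using field_kernel_list[of R] kernels by (simp add: set_eq_iff_mset_eq_distinct)
    then have "Sn_orbit (map (factor_struct Xm R x) (field_kernel_list R)) =
        Sn_orbit (map (factor_struct Xm R x) L)"
      by (intro Sn_orbit_eq_if_mset_eq) simp
    ultimately have "factor_orbit Xm (R, x) = Sn_orbit ds" by (simp add: factor_orbit_def)
    moreover have "(R, x) \<in> Zsp Xo p S" using R x(1) cring_R by (simp add: Zsp_def)
    ultimately show ?thesis by blast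
  qed
qed

definition rel_image :: "('a \<Rightarrow> 'b) \<Rightarrow> ('a \<times> 'a) set \<Rightarrow> ('b \<times> 'b) set" where
  "rel_image f \<pi> = (\<lambda>(a, b). (f a, f b)) ` \<pi>"

lemma rel_image_Image:
  assumes "inj_on f S" "\<pi> \<subseteq> S \<times> S" "a \<in> S"
  shows "rel_image f \<pi> `` {f a} = f ` (\<pi> `` {a})"
  using assms by (auto simp: rel_image_def inj_on_def image_iff)

lemma ker_rel_transport:
  assumes sg: "bij_betw sg S S'" and "carrier R = S" "carrier R' = S'"
  shows "ker_rel R' (f \<circ> inv_into S sg) = rel_image sg (ker_rel R f)"
proof -
  have inv: "inv_into S sg a' \<in> S" "sg (inv_into S sg a') = a'" if "a' \<in> S'" for a'
    using that sg by (auto simp: bij_betw_def inv_into_into f_inv_into_f)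
  have "(a', b') \<in> ker_rel R' (f \<circ> inv_into S sg) \<longleftrightarrow> (a', b') \<in> rel_image sg (ker_rel R f)" for a' b'
  proof
    assume "(a', b') \<in> ker_rel R' (f \<circ> inv_into S sg)"
    then have "a' \<in> S'" "b' \<in> S'" "f (inv_into S sg a') = f (inv_into S sg b')"
      using assms(3) by (auto simp: ker_rel_def)
    then show "(a', b') \<in> rel_image sg (ker_rel R f)"
      using inv assms(2) unfolding rel_image_def ker_rel_def
      by (auto intro!: image_eqI[of _ _ "(inv_into S sg a', inv_into S sg b')"])
  next
    assume "(a', b') \<in> rel_image sg (ker_rel R f)"
    then obtain a b where "a \<in> S" "b \<in> S" "f a = f b" "a' = sg a" "b' = sg b"
      using assms(2) by (auto simp: rel_image_def ker_rel_def)
    then show "(a', b') \<in> ker_rel R' (f \<circ> inv_into S sg)"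
      using sg assms(3) by (auto simp: ker_rel_def bij_betw_def)
  qed
  then show ?thesis by auto
qed

lemma field_product_cone_transport:
  fixes R :: "nat ring" and K :: "nat \<Rightarrow> nat ring"
  assumes "field_product_cone R n K pr" "carrier R = S" "bij_betw sg S S'"
  shows "field_product_cone (transport_ring sg R) n K (\<lambda>i. pr i \<circ> inv_into S sg)"
proof -
  interpret field_product_cone R n K pr by fact
  have inj: "inj_on sg (carrier R)" using assms(2,3) by (simp add: bij_betw_def)
  have inv_hom: "inv_into S sg \<in> ring_hom (transport_ring sg R) R"
    using transport_ring_inv_hom[OF inj cring.axioms(1)[OF cring_R]] assms(2) by simp
  have "bij_betw ((\<lambda>x. \<lambda>i\<in>{..<n}. pr i x) \<circ> inv_into S sg) S' (PiE {..<n} (\<lambda>i. carrier (K i)))"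
    using bij_betw_trans[OF bij_betw_inv_into[OF assms(3)]] tuple_bij assms(2) by simp
  moreover have "carrier (transport_ring sg R) = S'" using assms(2,3) by (simp add: bij_betw_def)
  ultimately show ?thesis
    using inv_hom cring_transport_ring[OF inj cring_R]
    by (intro field_product_cone.intro ring_product_cone.intro field_product_cone_axioms.intro
        ring_hom_trans[OF inv_hom proj_hom] cring_factor field_factor) (simp_all add: comp_def)
qed

lemma class_code_rel_image:
  assumes "inj_on sg S" "\<pi> \<subseteq> S \<times> S" "finite S" "a \<in> S"
  shows "class_code (rel_image sg \<pi>) (sg a) = set_encode (sg ` set_decode (class_code \<pi> a))"
proof -
  have "finite (\<pi> `` {a})" using assms(2,3) by (auto intro: finite_subset)
  then show ?thesis using rel_image_Image[OF assms(1,2,4)] by (simp add: class_code_def)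
qed

lemma inj_on_image_class_code:
  assumes "inj_on sg S" "\<pi> \<subseteq> S \<times> S" "finite S"
  shows "inj_on (\<lambda>c. set_encode (sg ` set_decode c)) (enc_classes S \<pi>)"
proof (rule inj_onI)
  fix c d assume "c \<in> enc_classes S \<pi>" "d \<in> enc_classes S \<pi>"
    and "set_encode (sg ` set_decode c) = set_encode (sg ` set_decode d)"
  moreover have "finite (\<pi> `` {a})" for a using assms(2,3) by (auto intro: finite_subset)
  then have "set_decode e \<subseteq> S" if "e \<in> enc_classes S \<pi>" for e
    using that assms(2) by (auto simp: enc_classes_eq_image_class_code class_code_def)
  ultimately have "set_decode c = set_decode d"
    using assms(1) by (simp add: set_encode_eq inj_on_image_eq_iff)
  then show "c = d" by (metis set_decode_inverse)
qed

lemma quotient_ring_transport: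
  fixes R :: "nat ring"
  assumes cring: "cring R" and carrier: "carrier R = S" and finite: "finite S"
    and sg: "bij_betw sg S S'" and equiv: "equiv S \<pi>"
    and cring_Q: "cring (quotient_ring R \<pi>)" and hom: "class_code \<pi> \<in> ring_hom R (quotient_ring R \<pi>)"
  defines "\<tau> \<equiv> \<lambda>c. set_encode (sg ` set_decode c)"
  shows "quotient_ring (transport_ring sg R) (rel_image sg \<pi>) = transport_ring \<tau> (quotient_ring R \<pi>)"
    and "class_code (rel_image sg \<pi>) \<in> ring_hom (transport_ring sg R) (transport_ring \<tau> (quotient_ring R \<pi>))"
proof -
  let ?R' = "transport_ring sg R" and ?Q = "quotient_ring R \<pi>" and ?\<pi>' = "rel_image sg \<pi>"
  let ?Q' = "transport_ring \<tau> ?Q"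
  have inj: "inj_on sg S" and image: "sg ` S = S'" using sg by (auto simp: bij_betw_def)
  have sub: "\<pi> \<subseteq> S \<times> S" using equiv by (auto simp: equiv_def refl_on_def)
  have inj_\<tau>: "inj_on \<tau> (carrier ?Q)"
    using inj_on_image_class_code[OF inj sub finite] carrier by (simp add: \<tau>_def)
  have cring_R': "cring ?R'" using cring_transport_ring[OF _ cring] inj carrier by simp
  have cring_Q': "cring ?Q'" by (rule cring_transport_ring[OF inj_\<tau> cring_Q])
  have carrier_R': "carrier ?R' = S'" using carrier image by simp
  define q where "q = (\<tau> \<circ> class_code \<pi>) \<circ> inv_into S sg"
  have q_hom: "q \<in> ring_hom ?R' ?Q'"
    using transport_ring_inv_hom[OF _ cring.axioms(1)[OF cring]] transport_ring_hom[OF inj_\<tau> cring.axioms(1)[OF cring_Q]]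
      inj carrier unfolding q_def by (auto intro!: ring_hom_trans[OF _ ring_hom_trans[OF hom]])
  have q_code: "q a' = class_code ?\<pi>' a'" if "a' \<in> S'" for a'
    using that class_code_rel_image[OF inj sub finite, of "inv_into S sg a'"] image
    by (auto simp: q_def \<tau>_def inv_into_into f_inv_into_f)
  have "ker_rel R (\<tau> \<circ> class_code \<pi>) = ker_rel R (class_code \<pi>)"
    using inj_\<tau> ring_hom_closed[OF hom] by (auto simp: ker_rel_def inj_on_def)
  then have ker_q: "ker_rel ?R' q = ?\<pi>'"
    unfolding q_def ker_rel_transport[OF sg carrier carrier_R']
    using ker_rel_class_code[OF equiv finite carrier] by simp
  have "q ` S' = \<tau> ` (class_code \<pi> ` (inv_into S sg ` S'))" unfolding q_def by (simp add: image_comp)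
  also have "\<dots> = carrier ?Q'"
    using bij_betw_imp_surj_on[OF bij_betw_inv_into[OF sg]] carrier
    by (simp add: enc_classes_eq_image_class_code)
  finally have "quotient_ring ?R' (ker_rel ?R' q) = ?Q'"
    using ring_on_transport_ring[of \<tau> ?Q] finite_imageI[OF finite, of sg] image carrier_R' q_code ker_q
    by (intro quotient_ring_ker_rel_eqI[OF cring.axioms(1)[OF cring_R'] cring.axioms(1)[OF cring_Q'] q_hom])
      simp_all
  then show "quotient_ring ?R' ?\<pi>' = ?Q'" using ker_q by simp
  show "class_code ?\<pi>' \<in> ring_hom ?R' ?Q'"
    using ring_hom_cong[OF q_hom _ cring.axioms(1)[OF cring_R']] q_code carrier_R' by simp
qed

lemma factor_struct_transport:
  fixes Xo :: "nat ring \<Rightarrow> 'x set" and R :: "nat ring"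
  assumes F: "is_functor Xo Xm" and cring: "cring R" and carrier: "carrier R = S"
    and finite: "finite S" and sg: "bij_betw sg S S'" and x: "x \<in> Xo R"
    and field: "field (quotient_ring R \<pi>)" and hom: "class_code \<pi> \<in> ring_hom R (quotient_ring R \<pi>)"
    and equiv: "equiv S \<pi>"
  defines "\<tau> \<equiv> \<lambda>c. set_encode (sg ` set_decode c)"
  shows "factor_struct Xm (transport_ring sg R) (Xm R (transport_ring sg R) sg x) (rel_image sg \<pi>) =
    (rel_image sg \<pi>, transp_struct Xm \<tau> (quotient_ring R \<pi>, Xm R (quotient_ring R \<pi>) (class_code \<pi>) x))"
proof -
  let ?R' = "transport_ring sg R" and ?Q = "quotient_ring R \<pi>" and ?\<pi>' = "rel_image sg \<pi>"
  let ?Q' = "transport_ring \<tau> ?Q"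
  have inj: "inj_on sg S" using sg by (simp add: bij_betw_def)
  have sub: "\<pi> \<subseteq> S \<times> S" using equiv by (auto simp: equiv_def refl_on_def)
  have cring_Q: "cring ?Q" using field by (simp add: field.axioms(1) domain.axioms(1))
  note quotient = quotient_ring_transport[OF cring carrier finite sg equiv cring_Q hom, folded \<tau>_def]
  have inj_\<tau>: "inj_on \<tau> (carrier ?Q)"
    using inj_on_image_class_code[OF inj sub finite] carrier by (simp add: \<tau>_def)
  have \<tau>_hom: "\<tau> \<in> ring_hom ?Q ?Q'" by (rule transport_ring_hom[OF inj_\<tau> cring.axioms(1)[OF cring_Q]])
  have sg_hom: "sg \<in> ring_hom R ?R'" using transport_ring_hom[OF _ cring.axioms(1)[OF cring]] inj carrier by simp
  have cring_R': "cring ?R'" using cring_transport_ring[OF _ cring] inj carrier by simp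
  have cring_Q': "cring ?Q'" by (rule cring_transport_ring[OF inj_\<tau> cring_Q])
  have "Xm ?R' ?Q' (class_code ?\<pi>') (Xm R ?R' sg x) = Xm R ?Q' (class_code ?\<pi>' \<circ> sg) x"
    by (rule functor_map_comp[OF F cring cring_R' cring_Q' sg_hom quotient(2) x, symmetric])
  also have "\<dots> = Xm R ?Q' (\<tau> \<circ> class_code \<pi>) x"
    using class_code_rel_image[OF inj sub finite] carrier
    by (intro functor_map_cong[OF F cring cring_Q' ring_hom_trans[OF sg_hom quotient(2)]
          ring_hom_trans[OF hom \<tau>_hom] _ x]) (simp add: \<tau>_def)
  also have "\<dots> = Xm ?Q ?Q' \<tau> (Xm R ?Q (class_code \<pi>) x)"
    by (rule functor_map_comp[OF F cring cring_Q cring_Q' hom \<tau>_hom x])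
  finally show ?thesis
    using quotient(1) by (simp add: factor_struct_def transp_struct_def transp_ring_eq_transport_ring)
qed

lemma (in Zsp_structure) factor_orbit_transport:
  assumes F: "is_functor Xo Xm" and sg: "bij_betw sg S S'"
  shows "factor_orbit Xm (transp_struct Xm sg (R, x)) =
    transp_expD (transp_struct Xm) sg (factor_orbit Xm (R, x))"
proof -
  define R' where "R' = transport_ring sg R"
  define x' where "x' = Xm R R' sg x"
  define G where "G = (\<lambda>d :: (nat \<times> nat) set \<times> nat ring \<times> 'x. ((\<lambda>(a, b). (sg a, sg b)) ` fst d,
    transp_struct Xm (\<lambda>c. set_encode (sg ` set_decode c)) (snd d)))"
  obtain n and K :: "nat \<Rightarrow> nat ring" and pr where cone: "field_product_cone R n K pr"
    by (rule decomposition)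
  have cone': "field_product_cone R' n K (\<lambda>i. pr i \<circ> inv_into S sg)"
    unfolding R'_def by (rule field_product_cone_transport[OF cone carrier_R sg])
  have carrier_R': "carrier R' = S'" using sg carrier_R by (simp add: R'_def bij_betw_def)
  have "ker_rel R' (pr i \<circ> inv_into S sg) = rel_image sg (ker_rel R (pr i))" for i
    by (rule ker_rel_transport[OF sg carrier_R carrier_R'])
  then have kernels': "field_kernels R' = rel_image sg ` field_kernels R"
    unfolding field_kernels_eq[OF cone] field_kernels_eq[OF cone'] image_image by simp
  have "inj_on (\<lambda>(a, b). (sg a, sg b)) (S \<times> S)" using sg by (auto simp: bij_betw_def inj_on_def)
  then have "inj_on (rel_image sg) (Pow (S \<times> S))"
    unfolding rel_image_def[abs_def] by (rule inj_on_image_Pow)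
  moreover have "field_kernels R \<subseteq> Pow (S \<times> S)"
    using field_kernel_facts(4) by (auto simp: equiv_def refl_on_def)
  ultimately have "inj_on (rel_image sg) (field_kernels R)" by (rule inj_on_subset)
  then have distinct: "distinct (map (rel_image sg) kernels)"
    using distinct_kernels set_kernels by (simp add: distinct_map)
  have "finite (field_kernels R')" using kernels' finite_field_kernels by simp
  then have "distinct (field_kernel_list R')" "set (field_kernel_list R') = set (map (rel_image sg) kernels)"
    using field_kernel_list[of R'] kernels' set_kernels by simp_all
  then have "mset (field_kernel_list R') = mset (map (rel_image sg) kernels)"
    using set_eq_iff_mset_eq_distinct distinct by blast
  then have "Sn_orbit (map (factor_struct Xm R' x') (field_kernel_list R')) =
      Sn_orbit (map (factor_struct Xm R' x') (map (rel_image sg) kernels))"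
    by (intro Sn_orbit_eq_if_mset_eq) (simp only: mset_map)
  also have "map (factor_struct Xm R' x') (map (rel_image sg) kernels) =
      map G (map (factor_struct Xm R x) kernels)"
    using factor_struct_transport[OF F cring_R carrier_R finite_S sg in_Xo field_kernel_facts(1,2,4)]
      set_kernels
    by (simp add: R'_def x'_def G_def factor_struct_def[of _ R x] rel_image_def)
  also have "Sn_orbit (map G (map (factor_struct Xm R x) kernels)) = map G ` factor_orbit Xm (R, x)"
    by (simp add: factor_orbit_def image_map_Sn_orbit)
  finally show ?thesis
    by (simp add: factor_orbit_def transp_expD_def transp_struct_def transp_ring_eq_transport_ring
        R'_def x'_def G_def)
qed

theorem lemma4p5:
  fixes Xo :: "nat ring \<Rightarrow> 'x set"
    and Xm :: "nat ring \<Rightarrow> nat ring \<Rightarrow> (nat \<Rightarrow> nat) \<Rightarrow> 'x \<Rightarrow> 'x"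
    and p :: nat
  assumes "is_functor Xo Xm"
    and "preserves_products Xo Xm"
    and "Factorial_Ring.prime p"
  shows "species_iso (Zsp Xo p) (transp_struct Xm)
                     (expD (Fsp Xo p)) (transp_expD (transp_struct Xm))"
proof -
  have Z: "Zsp_structure Xo p S (fst z) (snd z)" if "z \<in> Zsp Xo p S" "finite S" for S z
    using that by (intro Zsp_structure.intro) simp_all
  have "bij_betw (factor_orbit Xm) (Zsp Xo p S) (expD (Fsp Xo p) S)" if S: "finite S" for S
  proof (rule bij_betw_imageI)
    show "inj_on (factor_orbit Xm) (Zsp Xo p S)"
      using factor_orbit_inj[OF assms(1,2) Z[OF _ S] Z[OF _ S]] by (intro inj_onI) simp
    show "factor_orbit Xm ` Zsp Xo p S = expD (Fsp Xo p) S"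
    proof
      show "factor_orbit Xm ` Zsp Xo p S \<subseteq> expD (Fsp Xo p) S"
        using Zsp_structure.factor_orbit_in_expD[OF Z[OF _ S] assms(1)] by auto
      show "expD (Fsp Xo p) S \<subseteq> factor_orbit Xm ` Zsp Xo p S"
        using factor_orbit_surj[OF assms(1,2) S, where p = p] unfolding expD_def by blast
    qed
  qed
  moreover have "factor_orbit Xm (transp_struct Xm sg z) =
      transp_expD (transp_struct Xm) sg (factor_orbit Xm z)"
    if "finite S \<and> bij_betw sg S S'" "z \<in> Zsp Xo p S" for S S' sg z
    using Zsp_structure.factor_orbit_transport[OF Z[OF that(2)] assms(1), of sg S'] that by simp
  ultimately show ?thesis unfolding species_iso_def by (intro exI[of _ "\<lambda>_. factor_orbit Xm"]) blast
qed

end
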